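(* For $n\ge1$, let $\bm v$ and $\bm v^{(n)}$ be Markov chains of length variables with initial distributions $\pi$ and $\pi^{(n)}$ and transition kernels $\bm\psi=(\psi_j)_{j\ge1}$ and $\bm\psi^{(n)}=(\psi^{(n)}_j)_{j\ge1}$, respectively. Let $\bm w,\bm w^{(n)}$ be the corresponding Markov stick-breaking weights sequences, and let $\bm P,\bm P^{(n)}$ be proper Markov stick-breaking processes on $\mathbb X$ with parameters $(\pi,\bm\psi,P_0)$ and $(\pi^{(n)},\bm\psi^{(n)},P_0^{(n)})$. Suppose that, as $n\to\infty$: $\pi^{(n)}\to\pi$ weakly; $P_0^{(n)}\to P_0$ weakly; and for each $j\ge1$ and each sequence $u_n\to u$ in $[0,1]$, $\psi^{(n)}_j(u_n,\cdot)\to\psi_j(u,\cdot)$ weakly. Then $\bm v^{(n)}\to\bm v$ in distribution, $\bm w^{(n)}\to\bm w$ in distribution (in $[0,1]^\infty$ with the product topology), and $\bm P^{(n)}\to\bm P$ weakly in distribution.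
   Context: Let $\mathbb X$ be a complete separable metric space with Borel $\sigma$-field. Length variables $\bm v=(v_j)_{j\ge1}$ are $[0,1]$-valued random variables defining stick-breaking weights $w_1=v_1$, $w_j=v_j\prod_{i<j}(1-v_i)$. If $\bm v$ is a Markov chain with initial distribution $\pi$ and transition kernels $\psi_j(v,B)=\mathbb P[v_{j+1}\in B\mid v_j=v]$, $\bm w$ is the Markov stick-breaking weights sequence with parameters $(\pi,\bm\psi)$; given a diffuse probability measure $P_0$ on $\mathbb X$ and $(\theta_j)$ iid from $P_0$ independent of $\bm w$, $\bm P=\sum_j w_j\delta_{\theta_j}+(1-\sum_jw_j)P_0$ is the Markov stick-breaking process with parameters $(\pi,\bm\psi,P_0)$; it is proper if $\sum_j w_j=1$ a.s. Random probability measures $\bm P^{(n)}$ converge weakly in distribution to $\bm P$ if $\int f\,d\bm P^{(n)}\to\int f\,d\bm P$ in distribution for every bounded continuous $f:\mathbb X\to\mathbb R$. *)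

theory Defs
  imports "HOL-Probability.Probability"
begin

definition weak_conv_seq :: "(nat \<Rightarrow> 'b::topological_space measure) \<Rightarrow> 'b measure \<Rightarrow> bool" where
  "weak_conv_seq \<mu>s \<mu> \<longleftrightarrow>
     (\<forall>f :: 'b \<Rightarrow> real. continuous_on UNIV f \<and> bounded (range f) \<longrightarrow>
        (\<lambda>n. \<integral>x. f x \<partial>\<mu>s n) \<longlonglongrightarrow> (\<integral>x. f x \<partial>\<mu>))"

text \<open>Coordinates are 0-based: coordinate i is the paper's v_(i+1); the transition from
  coordinate i to coordinate i+1 uses the paper's kernel psi_(i+1), i.e. psi (Suc i).\<close>
fun mc_cyl :: "(nat \<Rightarrow> real \<Rightarrow> real measure) \<Rightarrow> (nat \<Rightarrow> real set) \<Rightarrow> nat \<Rightarrow> nat \<Rightarrow> real \<Rightarrow> ennreal" where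
  "mc_cyl \<psi> B i 0 u = indicator (B i) u"
| "mc_cyl \<psi> B i (Suc m) u = indicator (B i) u * (\<integral>\<^sup>+ y. mc_cyl \<psi> B (Suc i) m y \<partial>(\<psi> (Suc i) u))"

definition markov_chain_law :: "real measure \<Rightarrow> (nat \<Rightarrow> real \<Rightarrow> real measure) \<Rightarrow> (nat \<Rightarrow> real) measure \<Rightarrow> bool" where
  "markov_chain_law \<pi> \<psi> \<mu> \<longleftrightarrow>
     prob_space \<mu> \<and> sets \<mu> = sets (PiM UNIV (\<lambda>_::nat. borel :: real measure)) \<and>
     (\<forall>k B. (\<forall>i. B i \<in> sets borel) \<longrightarrow>
        emeasure \<mu> {x \<in> space \<mu>. \<forall>i\<le>k. x i \<in> B i} = (\<integral>\<^sup>+ u. mc_cyl \<psi> B 0 k u \<partial>\<pi>))"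

definition length_params :: "real measure \<Rightarrow> (nat \<Rightarrow> real \<Rightarrow> real measure) \<Rightarrow> bool" where
  "length_params \<pi> \<psi> \<longleftrightarrow>
     prob_space \<pi> \<and> sets \<pi> = sets borel \<and> emeasure \<pi> {0..1} = 1 \<and>
     (\<forall>j\<ge>1. \<psi> j \<in> restrict_space borel {0..1} \<rightarrow>\<^sub>M prob_algebra borel \<and>
        (\<forall>u\<in>{0..1}. emeasure (\<psi> j u) {0..1} = 1))"

definition sb_weights :: "(nat \<Rightarrow> real) \<Rightarrow> nat \<Rightarrow> real" where
  "sb_weights v j = v j * (\<Prod>i<j. 1 - v i)"

definition sb_measure :: "(nat \<Rightarrow> real) \<Rightarrow> (nat \<Rightarrow> 'a::topological_space) \<Rightarrow> 'a measure \<Rightarrow> 'a measure" where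
  "sb_measure w \<theta> P0 = measure_of UNIV (sets borel)
     (\<lambda>A. (\<Sum>j. ennreal (w j) * indicator A (\<theta> j)) + ennreal (1 - (\<Sum>j. w j)) * emeasure P0 A)"

definition diffuse_prob :: "'a::topological_space measure \<Rightarrow> bool" where
  "diffuse_prob P \<longleftrightarrow> prob_space P \<and> sets P = sets borel \<and> (\<forall>x. emeasure P {x} = 0)"

text \<open>The joint law of (V, Theta) is the product of the Markov chain law of V and the
  iid P0 law of Theta (so Theta is iid P0 and independent of V).\<close>
definition proper_msbp ::
  "'w measure \<Rightarrow> ('w \<Rightarrow> nat \<Rightarrow> real) \<Rightarrow> ('w \<Rightarrow> nat \<Rightarrow> 'a::topological_space) \<Rightarrow>
   real measure \<Rightarrow> (nat \<Rightarrow> real \<Rightarrow> real measure) \<Rightarrow> 'a measure \<Rightarrow> bool" where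
  "proper_msbp M V \<Theta> \<pi> \<psi> P0 \<longleftrightarrow>
     prob_space M \<and> length_params \<pi> \<psi> \<and> diffuse_prob P0 \<and>
     (\<forall>\<omega>\<in>space M. \<forall>j. V \<omega> j \<in> {0..1}) \<and>
     markov_chain_law \<pi> \<psi> (distr M (PiM UNIV (\<lambda>_. borel)) V) \<and>
     (\<lambda>\<omega>. (V \<omega>, \<Theta> \<omega>)) \<in> M \<rightarrow>\<^sub>M (PiM UNIV (\<lambda>_. borel) \<Otimes>\<^sub>M PiM UNIV (\<lambda>_. borel)) \<and>
     distr M (PiM UNIV (\<lambda>_. borel) \<Otimes>\<^sub>M PiM UNIV (\<lambda>_. borel)) (\<lambda>\<omega>. (V \<omega>, \<Theta> \<omega>))
       = distr M (PiM UNIV (\<lambda>_. borel)) V \<Otimes>\<^sub>M PiM UNIV (\<lambda>_. P0) \<and>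
     (AE \<omega> in M. sb_weights (V \<omega>) sums 1)"

end

(* The law of the first k + 1 length variables is the initial distribution followed by k
   kernel steps. By induction over the steps, weak convergence of the kernels along converging
   arguments turns into continuous convergence of the integrated test functions, and so the
   finite-dimensional laws converge. All laws live on the compact cube [0,1]^N, on which every
   continuous function is a uniform limit of functions of finitely many coordinates; hence the
   length variables converge in distribution, and so do the weights, a continuous function of them.

   For the random integral of a bounded continuous f we compare characteristic functions. Given
   the length variables, the first N atoms contribute the product of the characteristic functions
   of f under P0 at t w_j, while the remaining mass changes the characteristic function by at most
   |t| sup|f| prod_(i<N) (1 - v_i). The expectation of this remainder is a bounded continuous
   functional of the length variables and tends to 0 as N grows, so it is small for large N
   uniformly in n, and Levy's continuity theorem concludes. *)

theory Submission
  imports Defs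
begin

section \<open>Continuous convergence\<close>

definition converges_continuously_on ::
    "'b::metric_space set \<Rightarrow> (nat \<Rightarrow> 'b \<Rightarrow> 'c::real_normed_vector) \<Rightarrow> ('b \<Rightarrow> 'c) \<Rightarrow> bool" where
  "converges_continuously_on K h h0 \<longleftrightarrow>
     (\<forall>xs x. (\<forall>n. xs n \<in> K) \<longrightarrow> x \<in> K \<longrightarrow> xs \<longlonglongrightarrow> x \<longrightarrow> (\<lambda>n. h n (xs n)) \<longlonglongrightarrow> h0 x)"

lemma converges_continuously_onI:
  "(\<And>xs x. (\<And>n. xs n \<in> K) \<Longrightarrow> x \<in> K \<Longrightarrow> xs \<longlonglongrightarrow> x \<Longrightarrow> (\<lambda>n. h n (xs n)) \<longlonglongrightarrow> h0 x) \<Longrightarrow>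
    converges_continuously_on K h h0"
  unfolding converges_continuously_on_def by blast

lemma converges_continuously_onD:
  "converges_continuously_on K h h0 \<Longrightarrow> (\<And>n. xs n \<in> K) \<Longrightarrow> x \<in> K \<Longrightarrow> xs \<longlonglongrightarrow> x \<Longrightarrow>
    (\<lambda>n. h n (xs n)) \<longlonglongrightarrow> h0 x"
  unfolding converges_continuously_on_def by blast

lemma converges_continuously_on_const:
  "continuous_on UNIV g \<Longrightarrow> converges_continuously_on UNIV (\<lambda>_. g) g"
  by (auto intro!: converges_continuously_onI
      continuous_on_tendsto_compose[of UNIV g, unfolded o_def])

lemma converges_continuously_on_subseq:
  assumes h: "converges_continuously_on K h h0" and r: "strict_mono r"
    and xs: "\<And>k. xs k \<in> K" "x \<in> K" "xs \<longlonglongrightarrow> x"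
  shows "(\<lambda>k. h (r k) (xs k)) \<longlonglongrightarrow> h0 x"
proof -
  \<comment> \<open>Spread the sequence out along r, padding the gaps with its limit.\<close>
  define ys where "ys n = (if n \<in> range r then xs (inv r n) else x)" for n
  have ys_r: "ys (r k) = xs k" for k
    using strict_mono_imp_inj_on[OF r] by (simp add: ys_def)
  have ys_lim: "ys \<longlonglongrightarrow> x"
    unfolding lim_sequentially
  proof (intro allI impI)
    fix e :: real assume "e > 0"
    then obtain k0 where k0: "\<And>k. k \<ge> k0 \<Longrightarrow> dist (xs k) x < e"
      using xs(3) unfolding lim_sequentially by blast
    have "dist (ys n) x < e" if "n \<ge> r k0" for n
    proof (cases "n \<in> range r")
      case True
      then obtain k where k: "n = r k" by auto
      with that r have "k \<ge> k0" by (simp add: strict_mono_less_eq)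
      then show ?thesis using k0 k ys_r by simp
    qed (use \<open>e > 0\<close> in \<open>simp add: ys_def\<close>)
    then show "\<exists>n0. \<forall>n\<ge>n0. dist (ys n) x < e" by blast
  qed
  have "(\<lambda>n. h n (ys n)) \<longlonglongrightarrow> h0 x"
    by (rule converges_continuously_onD[OF h _ xs(2) ys_lim]) (simp add: ys_def xs(1,2))
  from LIMSEQ_subseq_LIMSEQ[OF this r] show ?thesis by (simp add: o_def ys_r)
qed

lemma converges_continuously_on_imp_continuous_on:
  assumes h: "converges_continuously_on K h h0"
  shows "continuous_on K h0"
proof (rule continuous_on_sequentiallyI)
  fix xs x assume xs: "\<forall>n. xs n \<in> K" "x \<in> K" "xs \<longlonglongrightarrow> x"
  have "\<exists>N. \<forall>n\<ge>N. norm (h n (xs k) - h0 (xs k)) < inverse (real (Suc k))" for k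
    using converges_continuously_onD[OF h, of "\<lambda>_. xs k"] xs
    unfolding LIMSEQ_iff by simp
  then obtain N where N: "\<And>k n. n \<ge> N k \<Longrightarrow> norm (h n (xs k) - h0 (xs k)) < inverse (real (Suc k))"
    by metis
  \<comment> \<open>A diagonal subsequence along which h (r k) is within 1/(k+1) of h0 at xs k.\<close>
  define r where "r k = k + (\<Sum>i\<le>k. N i)" for k
  have r: "strict_mono r" unfolding strict_mono_Suc_iff r_def by simp
  have "N k \<le> r k" for k
    using member_le_sum[of k "{..k}" N] by (simp add: r_def)
  then have "norm (h (r k) (xs k) - h0 (xs k)) \<le> inverse (real (Suc k))" for k
    by (meson N less_imp_le)
  then have "(\<lambda>k. h (r k) (xs k) - h0 (xs k)) \<longlonglongrightarrow> 0"
    by (intro Lim_null_comparison[OF _ LIMSEQ_inverse_real_of_nat] always_eventually allI)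
  with converges_continuously_on_subseq[OF h r] xs show "(\<lambda>n. h0 (xs n)) \<longlonglongrightarrow> h0 x"
    by (metis Lim_transform2)
qed

lemma converges_continuously_on_imp_uniformly:
  assumes h: "converges_continuously_on K h h0" and K: "compact K" and e: "e > 0"
  shows "\<forall>\<^sub>F n in sequentially. \<forall>x\<in>K. norm (h n x - h0 x) < e"
proof (rule ccontr)
  assume "\<not> ?thesis"
  then obtain r :: "nat \<Rightarrow> nat" where r: "strict_mono r"
    and "\<And>n. \<exists>x\<in>K. norm (h (r n) x - h0 x) \<ge> e"
    by (auto simp: not_less dest!: not_eventually_sequentiallyD)
  then obtain xs where xs: "\<And>n. xs n \<in> K" "\<And>n. norm (h (r n) (xs n) - h0 (xs n)) \<ge> e"
    by metis
  obtain l s where l: "l \<in> K" "strict_mono s" "(xs \<circ> s) \<longlonglongrightarrow> l"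
    using compact_imp_seq_compact[OF K] xs(1) by (metis seq_compactE)
  have "(\<lambda>k. h ((r \<circ> s) k) ((xs \<circ> s) k)) \<longlonglongrightarrow> h0 l"
    using xs(1) l
    by (intro converges_continuously_on_subseq[OF h strict_mono_o[OF r l(2)]]) (auto simp: o_def)
  moreover have "(\<lambda>k. h0 ((xs \<circ> s) k)) \<longlonglongrightarrow> h0 l"
    using converges_continuously_on_imp_continuous_on[OF h] l xs(1)
    unfolding continuous_on_sequentially by (auto simp: o_def)
  ultimately have "(\<lambda>k. h (r (s k)) (xs (s k)) - h0 (xs (s k))) \<longlonglongrightarrow> 0"
    using tendsto_diff by fastforce
  then obtain k where "norm (h (r (s k)) (xs (s k)) - h0 (xs (s k))) < e"
    using e unfolding LIMSEQ_iff by fastforce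
  with xs(2)[of "s k"] show False by simp
qed

lemma tendsto_of_approximations:
  fixes a :: "nat \<Rightarrow> 'a::metric_space"
  assumes lim: "\<And>N. (\<lambda>n. b N n) \<longlonglongrightarrow> b' N"
    and approx: "\<And>e. e > 0 \<Longrightarrow>
      \<exists>N. (\<forall>\<^sub>F n in sequentially. dist (a n) (b N n) < e) \<and> dist a' (b' N) < e"
  shows "a \<longlonglongrightarrow> a'"
proof (rule tendstoI)
  fix e :: real assume "e > 0"
  then obtain N where N: "\<forall>\<^sub>F n in sequentially. dist (a n) (b N n) < e / 3" "dist a' (b' N) < e / 3"
    using approx[of "e / 3"] by auto
  have "\<forall>\<^sub>F n in sequentially. dist (b N n) (b' N) < e / 3"
    using lim \<open>e > 0\<close> by (intro tendstoD) auto
  with N(1) show "\<forall>\<^sub>F n in sequentially. dist (a n) a' < e"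
  proof eventually_elim
    case (elim n)
    then show ?case
      using dist_triangle[of "a n" a' "b N n"] dist_triangle[of "b N n" a' "b' N"]
        dist_commute[of a' "b' N"] N(2) by linarith
  qed
qed

section \<open>Weak convergence and continuously converging integrands\<close>

definition borel_prob_on :: "'b::topological_space set \<Rightarrow> 'b measure \<Rightarrow> bool" where
  "borel_prob_on K \<nu> \<longleftrightarrow> prob_space \<nu> \<and> sets \<nu> = sets borel \<and> (AE x in \<nu>. x \<in> K)"

lemma AE_of_emeasure_eq_1:
  assumes "prob_space M" "A \<in> sets M" "emeasure M A = 1"
  shows "AE x in M. x \<in> A"
proof -
  interpret prob_space M by fact
  show ?thesis using assms by (intro AE_prob_1) (simp add: emeasure_eq_measure)
qed

lemma abs_integral_diff_le:
  fixes f g :: "'b \<Rightarrow> real"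
  assumes M: "prob_space M" and meas: "f \<in> borel_measurable M" "g \<in> borel_measurable M"
    and bound: "\<And>x. \<bar>f x\<bar> \<le> B" "\<And>x. \<bar>g x\<bar> \<le> B" and close: "AE x in M. \<bar>f x - g x\<bar> \<le> e"
  shows "\<bar>(\<integral>x. f x \<partial>M) - (\<integral>x. g x \<partial>M)\<bar> \<le> e"
proof -
  interpret prob_space M by fact
  have int: "integrable M f" "integrable M g"
    using meas bound by (auto intro!: integrable_const_bound[where B=B])
  have "\<bar>(\<integral>x. f x \<partial>M) - (\<integral>x. g x \<partial>M)\<bar> \<le> (\<integral>x. \<bar>f x - g x\<bar> \<partial>M)"
    using int integral_abs_bound[of M "\<lambda>x. f x - g x"] by simp
  also have "\<dots> \<le> (\<integral>x. e \<partial>M)"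
    using int close by (intro integral_mono_AE) auto
  finally show ?thesis by (simp add: prob_space)
qed

lemma abs_integral_le:
  fixes f :: "'b \<Rightarrow> real"
  assumes "prob_space M" "f \<in> borel_measurable M" "\<And>x. \<bar>f x\<bar> \<le> B"
  shows "\<bar>\<integral>x. f x \<partial>M\<bar> \<le> B"
proof -
  have "0 \<le> B" using assms(3) by (rule order_trans[OF abs_ge_zero])
  then show ?thesis using abs_integral_diff_le[of M f "\<lambda>_. 0" B B] assms by simp
qed

lemma weak_conv_seq_integral_continuous_on:
  fixes \<nu> :: "nat \<Rightarrow> 'b::metric_space measure" and g :: "'b \<Rightarrow> real"
  assumes wc: "weak_conv_seq \<nu> \<nu>0" and \<nu>: "\<And>n. borel_prob_on K (\<nu> n)" "borel_prob_on K \<nu>0"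
    and K: "compact K"
    and r: "continuous_on UNIV r" "\<And>x. r x \<in> K" "\<And>x. x \<in> K \<Longrightarrow> r x = x"
    and g: "continuous_on K g" "g \<in> borel_measurable borel"
  shows "(\<lambda>n. \<integral>x. g x \<partial>\<nu> n) \<longlonglongrightarrow> (\<integral>x. g x \<partial>\<nu>0)"
proof -
  \<comment> \<open>Extend g from the support K to a bounded continuous function by the retraction r.\<close>
  have gr: "continuous_on UNIV (g \<circ> r)"
    using continuous_on_compose[OF r(1) continuous_on_subset[OF g(1)]] r(2) by auto
  have "bounded (range (g \<circ> r))"
    using compact_imp_bounded[OF compact_continuous_image[OF g(1) K]] r(2)
    by (auto intro: bounded_subset)
  with gr wc have lim: "(\<lambda>n. \<integral>x. (g \<circ> r) x \<partial>\<nu> n) \<longlonglongrightarrow> (\<integral>x. (g \<circ> r) x \<partial>\<nu>0)"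
    unfolding weak_conv_seq_def by blast
  have "(\<integral>x. (g \<circ> r) x \<partial>\<mu>) = (\<integral>x. g x \<partial>\<mu>)" if "borel_prob_on K \<mu>" for \<mu>
  proof (rule integral_cong_AE)
    show "g \<circ> r \<in> borel_measurable \<mu>" "g \<in> borel_measurable \<mu>"
      using that borel_measurable_continuous_onI[OF gr] g(2)
      by (simp_all add: borel_prob_on_def cong: measurable_cong_sets)
    show "AE x in \<mu>. (g \<circ> r) x = g x"
      using that by (auto simp: borel_prob_on_def r(3) elim: AE_mp)
  qed
  with lim \<nu> show ?thesis by simp
qed

lemma weak_conv_seq_integral_converges_continuously:
  fixes \<nu> :: "nat \<Rightarrow> 'b::metric_space measure" and h :: "nat \<Rightarrow> 'b \<Rightarrow> real"
  assumes wc: "weak_conv_seq \<nu> \<nu>0" and \<nu>: "\<And>n. borel_prob_on K (\<nu> n)" "borel_prob_on K \<nu>0"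
    and K: "compact K"
    and r: "continuous_on UNIV r" "\<And>x. r x \<in> K" "\<And>x. x \<in> K \<Longrightarrow> r x = x"
    and meas: "\<And>n. h n \<in> borel_measurable borel" "h0 \<in> borel_measurable borel"
    and bound: "\<And>n x. \<bar>h n x\<bar> \<le> B" "\<And>x. \<bar>h0 x\<bar> \<le> B"
    and conv: "converges_continuously_on K h h0"
  shows "(\<lambda>n. \<integral>x. h n x \<partial>\<nu> n) \<longlonglongrightarrow> (\<integral>x. h0 x \<partial>\<nu>0)"
proof (rule Lim_transform)
  show "(\<lambda>n. \<integral>x. h0 x \<partial>\<nu> n) \<longlonglongrightarrow> (\<integral>x. h0 x \<partial>\<nu>0)"
    by (rule weak_conv_seq_integral_continuous_on[OF wc \<nu> K r
          converges_continuously_on_imp_continuous_on[OF conv] meas(2)])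
  show "(\<lambda>n. (\<integral>x. h n x \<partial>\<nu> n) - (\<integral>x. h0 x \<partial>\<nu> n)) \<longlonglongrightarrow> 0"
  proof (rule tendstoI)
    fix e :: real assume "e > 0"
    then have "\<forall>\<^sub>F n in sequentially. \<forall>x\<in>K. norm (h n x - h0 x) < e / 2"
      by (intro converges_continuously_on_imp_uniformly[OF conv K]) simp
    then show "\<forall>\<^sub>F n in sequentially. dist ((\<integral>x. h n x \<partial>\<nu> n) - (\<integral>x. h0 x \<partial>\<nu> n)) 0 < e"
    proof (rule eventually_mono)
      fix n assume close: "\<forall>x\<in>K. norm (h n x - h0 x) < e / 2"
      have "\<bar>(\<integral>x. h n x \<partial>\<nu> n) - (\<integral>x. h0 x \<partial>\<nu> n)\<bar> \<le> e / 2"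
      proof (rule abs_integral_diff_le[OF _ _ _ bound(1,2)])
        show "prob_space (\<nu> n)" using \<nu>(1) by (simp add: borel_prob_on_def)
        show "h n \<in> borel_measurable (\<nu> n)" "h0 \<in> borel_measurable (\<nu> n)"
          using meas \<nu>(1)[of n] by (simp_all add: borel_prob_on_def cong: measurable_cong_sets)
        have "AE x in \<nu> n. x \<in> K" using \<nu>(1) by (simp add: borel_prob_on_def)
        then show "AE x in \<nu> n. \<bar>h n x - h0 x\<bar> \<le> e / 2"
          by eventually_elim (use close in fastforce)
      qed
      then show "dist ((\<integral>x. h n x \<partial>\<nu> n) - (\<integral>x. h0 x \<partial>\<nu> n)) 0 < e"
        using \<open>e > 0\<close> by simp
    qed
  qed
qed

lemma weak_conv_seq_integral_converges_continuously_complex: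
  fixes \<nu> :: "nat \<Rightarrow> 'b::metric_space measure" and h :: "nat \<Rightarrow> 'b \<Rightarrow> complex"
  assumes wc: "weak_conv_seq \<nu> \<nu>0" and \<nu>: "\<And>n. borel_prob_on K (\<nu> n)" "borel_prob_on K \<nu>0"
    and K: "compact K"
    and r: "continuous_on UNIV r" "\<And>x. r x \<in> K" "\<And>x. x \<in> K \<Longrightarrow> r x = x"
    and meas: "\<And>n. h n \<in> borel_measurable borel" "h0 \<in> borel_measurable borel"
    and bound: "\<And>n x. cmod (h n x) \<le> B" "\<And>x. cmod (h0 x) \<le> B"
    and conv: "converges_continuously_on K h h0"
  shows "(\<lambda>n. \<integral>x. h n x \<partial>\<nu> n) \<longlonglongrightarrow> (\<integral>x. h0 x \<partial>\<nu>0)"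
proof -
  have integrable: "integrable \<mu> g"
    if "borel_prob_on K \<mu>" "g \<in> borel_measurable borel" "\<And>x. cmod (g x) \<le> B"
    for \<mu> and g :: "'b \<Rightarrow> complex"
    using that unfolding borel_prob_on_def
    by (intro finite_measure.integrable_const_bound[where B=B] prob_space.finite_measure)
      (auto cong: measurable_cong_sets)
  have "(\<lambda>n. \<integral>x. Re (h n x) \<partial>\<nu> n) \<longlonglongrightarrow> (\<integral>x. Re (h0 x) \<partial>\<nu>0)"
  proof (rule weak_conv_seq_integral_converges_continuously[OF wc \<nu> K r, where B=B])
    show "converges_continuously_on K (\<lambda>n x. Re (h n x)) (\<lambda>x. Re (h0 x))"
      using conv by (auto simp: converges_continuously_on_def intro: tendsto_Re)
  qed (use meas bound in \<open>auto intro: abs_Re_le_cmod[THEN order_trans]\<close>)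
  moreover have "(\<lambda>n. \<integral>x. Im (h n x) \<partial>\<nu> n) \<longlonglongrightarrow> (\<integral>x. Im (h0 x) \<partial>\<nu>0)"
  proof (rule weak_conv_seq_integral_converges_continuously[OF wc \<nu> K r, where B=B])
    show "converges_continuously_on K (\<lambda>n x. Im (h n x)) (\<lambda>x. Im (h0 x))"
      using conv by (auto simp: converges_continuously_on_def intro: tendsto_Im)
  qed (use meas bound in \<open>auto intro: abs_Im_le_cmod[THEN order_trans]\<close>)
  ultimately show ?thesis
    using integrable[OF \<nu>(1) meas(1) bound(1)] integrable[OF \<nu>(2) meas(2) bound(2)]
    by (simp add: tendsto_complex_iff)
qed

section \<open>The sequence space and its unit cube\<close>

abbreviation seq_borel :: "(nat \<Rightarrow> 'a::topological_space) measure" where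
  "seq_borel \<equiv> PiM UNIV (\<lambda>_. borel)"

lemma space_seq_borel: "space seq_borel = UNIV"
  by (simp add: space_PiM)

lemma borel_measurable_seq_borel:
  "f \<in> borel_measurable (borel :: (nat \<Rightarrow> real) measure) \<Longrightarrow> f \<in> borel_measurable seq_borel"
  using measurable_cong_sets[OF sets_PiM_equal_borel refl] by blast

lemma tendsto_fun_componentwise_iff:
  fixes f :: "'c \<Rightarrow> 'a \<Rightarrow> 'b::topological_space"
  shows "(f \<longlongrightarrow> l) F \<longleftrightarrow> (\<forall>i. ((\<lambda>a. f a i) \<longlongrightarrow> l i) F)"
  using limitin_componentwise[of "\<lambda>_. euclidean" UNIV f l F]
  by (simp add: euclidean_product_topology)

lemma clamp_01_in_interval: "clamp 0 1 u \<in> {0..1::real}"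
  using clamp_in_interval[of 0 1 u] by simp

lemma continuous_on_clamp_01: "continuous_on UNIV (clamp 0 (1::real))"
  using clamp_continuous_on[of 0 1 id UNIV] by simp

lemma measurable_clamp_01[measurable]: "clamp 0 1 \<in> borel_measurable (borel :: real measure)"
  by (rule borel_measurable_continuous_onI[OF continuous_on_clamp_01])

definition unit_cube :: "(nat \<Rightarrow> real) set" where
  "unit_cube = {x. \<forall>i. x i \<in> {0..1}}"

lemma compact_unit_cube: "compact unit_cube"
proof -
  have "compactin (product_topology (\<lambda>_. euclidean) UNIV) (PiE UNIV (\<lambda>_. {0..1::real}))"
    by (simp add: compactin_PiE)
  moreover have "unit_cube = PiE UNIV (\<lambda>_. {0..1})"
    by (auto simp: unit_cube_def PiE_def)
  ultimately show ?thesis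
    by (metis compactin_euclidean_iff euclidean_product_topology)
qed

lemma unit_cube_in_sets: "{x \<in> space seq_borel. x \<in> unit_cube} \<in> sets seq_borel"
  unfolding unit_cube_def by measurable

definition clamp_cube :: "(nat \<Rightarrow> real) \<Rightarrow> nat \<Rightarrow> real" where
  "clamp_cube x = (\<lambda>i. clamp 0 1 (x i))"

lemma clamp_cube_in_unit_cube: "clamp_cube x \<in> unit_cube"
  unfolding clamp_cube_def unit_cube_def using clamp_01_in_interval by blast

lemma clamp_cube_id: "x \<in> unit_cube \<Longrightarrow> clamp_cube x = x"
  by (simp add: clamp_cube_def unit_cube_def)

lemma continuous_on_clamp_cube: "continuous_on UNIV clamp_cube"
  unfolding clamp_cube_def
  by (intro continuous_on_coordinatewise_then_product
      continuous_on_compose2[OF continuous_on_clamp_01 continuous_on_product_coordinates]) auto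

definition truncate :: "nat \<Rightarrow> (nat \<Rightarrow> real) \<Rightarrow> nat \<Rightarrow> real" where
  "truncate k x = (\<lambda>l. if l \<le> k then x l else 0)"

lemma measurable_truncate[measurable]: "truncate k \<in> seq_borel \<rightarrow>\<^sub>M seq_borel"
  unfolding truncate_def by (rule measurable_PiM_single') auto

lemma continuous_on_truncate: "continuous_on UNIV (truncate k)"
  unfolding truncate_def
proof (intro continuous_on_coordinatewise_then_product)
  show "continuous_on UNIV (\<lambda>x::nat \<Rightarrow> real. if i \<le> k then x i else 0)" for i
    by (cases "i \<le> k") auto
qed

lemma converges_continuously_on_truncate:
  fixes f :: "(nat \<Rightarrow> real) \<Rightarrow> real"
  assumes "continuous_on UNIV f"
  shows "converges_continuously_on K (\<lambda>k x. f (truncate k x)) f"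
proof (rule converges_continuously_onI)
  fix xs x assume lim: "xs \<longlonglongrightarrow> (x :: nat \<Rightarrow> real)"
  have "(\<lambda>k. truncate k (xs k)) \<longlonglongrightarrow> x"
    unfolding tendsto_fun_componentwise_iff[of "\<lambda>k. truncate k (xs k)"]
  proof
    fix l
    have "(\<lambda>k. xs k l) \<longlonglongrightarrow> x l"
      using lim unfolding tendsto_fun_componentwise_iff[of xs] by blast
    moreover have "\<forall>\<^sub>F k in sequentially. xs k l = truncate k (xs k) l"
      unfolding eventually_sequentially truncate_def by (intro exI[of _ l]) auto
    ultimately show "(\<lambda>k. truncate k (xs k) l) \<longlonglongrightarrow> x l"
      by (rule Lim_transform_eventually)
  qed
  then show "(\<lambda>k. f (truncate k (xs k))) \<longlonglongrightarrow> f x"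
    using assms by (auto intro: continuous_on_tendsto_compose[of UNIV f, unfolded o_def])
qed

lemma weak_conv_seq_of_truncations:
  fixes \<mu>s :: "nat \<Rightarrow> (nat \<Rightarrow> real) measure"
  assumes \<mu>: "\<And>n. borel_prob_on unit_cube (\<mu>s n)" "borel_prob_on unit_cube \<mu>"
    and trunc_lim: "\<And>(f :: (nat \<Rightarrow> real) \<Rightarrow> real) k. continuous_on UNIV f \<Longrightarrow> bounded (range f) \<Longrightarrow>
      (\<lambda>n. \<integral>x. f (truncate k x) \<partial>\<mu>s n) \<longlonglongrightarrow> (\<integral>x. f (truncate k x) \<partial>\<mu>)"
  shows "weak_conv_seq \<mu>s \<mu>"
  unfolding weak_conv_seq_def
proof (intro allI impI, elim conjE)
  fix f :: "(nat \<Rightarrow> real) \<Rightarrow> real"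
  assume f: "continuous_on UNIV f" "bounded (range f)"
  then obtain c where c: "\<And>x. \<bar>f x\<bar> \<le> c" unfolding bounded_real by blast
  have f_meas: "f \<in> borel_measurable borel" "(\<lambda>x. f (truncate k x)) \<in> borel_measurable borel" for k
    using f(1) continuous_on_compose2[OF f(1) continuous_on_truncate]
    by (auto intro: borel_measurable_continuous_onI)
  have close: "dist (\<integral>x. f x \<partial>\<nu>) (\<integral>x. f (truncate k x) \<partial>\<nu>) \<le> e"
    if unif: "\<forall>x\<in>unit_cube. norm (f (truncate k x) - f x) < e" and \<nu>: "borel_prob_on unit_cube \<nu>"
    for k e \<nu>
  proof -
    have "AE x in \<nu>. x \<in> unit_cube" using \<nu> by (simp add: borel_prob_on_def)
    then have "AE x in \<nu>. \<bar>f x - f (truncate k x)\<bar> \<le> e"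
    proof eventually_elim
      case (elim x)
      with unif have "\<bar>f (truncate k x) - f x\<bar> < e" by simp
      then show ?case by linarith
    qed
    with \<nu> f_meas c show ?thesis
      unfolding borel_prob_on_def dist_real_def
      by (intro abs_integral_diff_le) (auto cong: measurable_cong_sets)
  qed
  show "(\<lambda>n. \<integral>x. f x \<partial>\<mu>s n) \<longlonglongrightarrow> (\<integral>x. f x \<partial>\<mu>)"
  proof (rule tendsto_of_approximations[OF trunc_lim[OF f]])
    fix e :: real assume "e > 0"
    then have "\<forall>\<^sub>F k in sequentially. \<forall>x\<in>unit_cube. norm (f (truncate k x) - f x) < e / 2"
      by (intro converges_continuously_on_imp_uniformly converges_continuously_on_truncate f
          compact_unit_cube) simp
    then obtain k where "\<forall>x\<in>unit_cube. norm (f (truncate k x) - f x) < e / 2"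
      unfolding eventually_sequentially by blast
    with close have close_k: "dist (\<integral>x. f x \<partial>\<nu>) (\<integral>x. f (truncate k x) \<partial>\<nu>) < e"
      if "borel_prob_on unit_cube \<nu>" for \<nu>
      using that \<open>e > 0\<close> by fastforce
    show "\<exists>k. (\<forall>\<^sub>F n in sequentially.
        dist (\<integral>x. f x \<partial>\<mu>s n) (\<integral>x. f (truncate k x) \<partial>\<mu>s n) < e) \<and>
        dist (\<integral>x. f x \<partial>\<mu>) (\<integral>x. f (truncate k x) \<partial>\<mu>) < e"
      using close_k[OF \<mu>(1)] close_k[OF \<mu>(2)] by (intro exI[of _ k] conjI always_eventually allI)
  qed
qed

lemma weak_conv_seq_distr:
  fixes \<mu>s :: "nat \<Rightarrow> (nat \<Rightarrow> real) measure" and T :: "(nat \<Rightarrow> real) \<Rightarrow> nat \<Rightarrow> real"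
  assumes wc: "weak_conv_seq \<mu>s \<mu>"
    and sets: "\<And>n. sets (\<mu>s n) = sets seq_borel" "sets \<mu> = sets seq_borel"
    and T: "T \<in> seq_borel \<rightarrow>\<^sub>M seq_borel" "continuous_on UNIV T"
  shows "weak_conv_seq (\<lambda>n. distr (\<mu>s n) seq_borel T) (distr \<mu> seq_borel T)"
  unfolding weak_conv_seq_def
proof (intro allI impI, elim conjE)
  fix f :: "(nat \<Rightarrow> real) \<Rightarrow> real" assume f: "continuous_on UNIV f" "bounded (range f)"
  have f_meas: "f \<in> borel_measurable seq_borel"
    using f(1) by (intro borel_measurable_seq_borel borel_measurable_continuous_onI)
  have "continuous_on UNIV (\<lambda>x. f (T x))" "bounded (range (\<lambda>x. f (T x)))"
    using continuous_on_compose2[OF f(1) T(2)] f(2) by (auto simp: bounded_real)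
  with wc have "(\<lambda>n. \<integral>x. f (T x) \<partial>\<mu>s n) \<longlonglongrightarrow> (\<integral>x. f (T x) \<partial>\<mu>)"
    unfolding weak_conv_seq_def by blast
  moreover have "(\<integral>x. f x \<partial>distr \<nu> seq_borel T) = (\<integral>x. f (T x) \<partial>\<nu>)"
    if "sets \<nu> = sets seq_borel" for \<nu>
    using that T(1) f_meas by (intro integral_distr) (simp_all cong: measurable_cong_sets)
  ultimately show "(\<lambda>n. \<integral>x. f x \<partial>distr (\<mu>s n) seq_borel T) \<longlonglongrightarrow> (\<integral>x. f x \<partial>distr \<mu> seq_borel T)"
    using sets by simp
qed

section \<open>Laws of Markov chains of length variables\<close>

definition unit_kernels :: "(nat \<Rightarrow> real \<Rightarrow> real measure) \<Rightarrow> bool" where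
  "unit_kernels \<psi> \<longleftrightarrow>
     (\<forall>j. \<psi> j \<in> borel \<rightarrow>\<^sub>M prob_algebra borel) \<and> (\<forall>j u. AE y in \<psi> j u. y \<in> {0..1})"

lemma measurable_unit_kernels: "unit_kernels \<psi> \<Longrightarrow> \<psi> j \<in> borel \<rightarrow>\<^sub>M prob_algebra borel"
  by (simp add: unit_kernels_def)

lemma unit_kernels_space: "unit_kernels \<psi> \<Longrightarrow> \<psi> j u \<in> space (prob_algebra borel)"
  using measurable_space[OF measurable_unit_kernels] by auto

lemma unit_kernels_borel_prob_on: "unit_kernels \<psi> \<Longrightarrow> borel_prob_on {0..1} (\<psi> j u)"
  using unit_kernels_space[of \<psi> j u]
  by (simp add: borel_prob_on_def space_prob_algebra unit_kernels_def)

text \<open>The law of the chain driven by \<psi> that is in state u at time i, run for m steps.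
  Only the coordinates i, ..., i + m are meaningful; all others carry the final state.\<close>
fun chain_kernel :: "(nat \<Rightarrow> real \<Rightarrow> real measure) \<Rightarrow> nat \<Rightarrow> nat \<Rightarrow> real \<Rightarrow> (nat \<Rightarrow> real) measure" where
  "chain_kernel \<psi> i 0 u = return seq_borel (\<lambda>_. u)"
| "chain_kernel \<psi> i (Suc m) u =
     \<psi> (Suc i) u \<bind> (\<lambda>y. distr (chain_kernel \<psi> (Suc i) m y) seq_borel (\<lambda>x. x(i := u)))"

lemma measurable_seq_upd:
  "g \<in> N \<rightarrow>\<^sub>M borel \<Longrightarrow> f \<in> N \<rightarrow>\<^sub>M seq_borel \<Longrightarrow> (\<lambda>p. (f p)(i := g p)) \<in> N \<rightarrow>\<^sub>M seq_borel"
  by (rule measurable_fun_upd[where J=UNIV]) auto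

lemma measurable_chain_kernel_step:
  assumes "Q \<in> borel \<rightarrow>\<^sub>M prob_algebra seq_borel"
  shows "(\<lambda>y. distr (Q y) seq_borel (\<lambda>x. x(i := u))) \<in> borel \<rightarrow>\<^sub>M prob_algebra seq_borel"
  by (rule measurable_distr_prob_space2[OF assms])
    (auto simp: split_beta' intro!: measurable_seq_upd)

lemma measurable_chain_kernel:
  "unit_kernels \<psi> \<Longrightarrow> chain_kernel \<psi> i m \<in> borel \<rightarrow>\<^sub>M prob_algebra seq_borel"
proof (induction m arbitrary: i)
  case 0
  have "(\<lambda>u::real. \<lambda>_::nat. u) \<in> borel \<rightarrow>\<^sub>M seq_borel" by (rule measurable_PiM_single') auto
  then show ?case by (simp add: measurable_compose[OF _ measurable_return_prob_space])
next
  case (Suc m)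
  have "(\<lambda>(u, y). distr (chain_kernel \<psi> (Suc i) m y) seq_borel (\<lambda>x. x(i := u)))
      \<in> borel \<Otimes>\<^sub>M borel \<rightarrow>\<^sub>M prob_algebra seq_borel"
    unfolding split_beta'
    by (rule measurable_distr_prob_space2
        [OF measurable_compose[OF measurable_snd Suc.IH[OF Suc.prems]]])
      (auto simp: split_beta' intro!: measurable_seq_upd)
  then show ?case
    by (simp only: chain_kernel.simps
        measurable_bind_prob_space2[OF measurable_unit_kernels[OF Suc.prems]])
qed

lemma chain_kernel_space: "unit_kernels \<psi> \<Longrightarrow> chain_kernel \<psi> i m u \<in> space (prob_algebra seq_borel)"
  using measurable_space[OF measurable_chain_kernel] by auto

lemma prob_space_chain_kernel: "unit_kernels \<psi> \<Longrightarrow> prob_space (chain_kernel \<psi> i m u)"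
  using chain_kernel_space[of \<psi> i m u] by (simp add: space_prob_algebra)

lemma sets_chain_kernel: "unit_kernels \<psi> \<Longrightarrow> sets (chain_kernel \<psi> i m u) = sets seq_borel"
  using chain_kernel_space[of \<psi> i m u] by (simp add: space_prob_algebra)

lemma measurable_integral_kernel:
  assumes "K \<in> N \<rightarrow>\<^sub>M prob_algebra L" "F \<in> borel_measurable L"
  shows "(\<lambda>y. \<integral>x. (F x :: real) \<partial>K y) \<in> borel_measurable N"
  using measurable_compose[OF measurable_prob_algebraD[OF assms(1)]
      integral_measurable_subprob_algebra[OF assms(2)]] .

definition cylinder :: "nat \<Rightarrow> nat \<Rightarrow> (nat \<Rightarrow> real set) \<Rightarrow> (nat \<Rightarrow> real) set" where
  "cylinder i m B = {x \<in> space seq_borel. \<forall>l\<in>{i..i+m}. x l \<in> B l}"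

lemma cylinder_in_sets:
  assumes [measurable]: "\<And>l. B l \<in> sets borel"
  shows "cylinder i m B \<in> sets seq_borel"
  unfolding cylinder_def by measurable

lemma emeasure_chain_kernel_cylinder:
  assumes \<psi>: "unit_kernels \<psi>" and agree: "\<And>j u. j \<ge> 1 \<Longrightarrow> u \<in> {0..1} \<Longrightarrow> \<psi> j u = \<psi>' j u"
    and B: "\<And>l. B l \<in> sets borel"
  shows "u \<in> {0..1} \<Longrightarrow> emeasure (chain_kernel \<psi> i m u) (cylinder i m B) = mc_cyl \<psi>' B i m u"
proof (induction m arbitrary: i u)
  case 0
  have "emeasure (chain_kernel \<psi> i 0 u) (cylinder i 0 B) = indicator (cylinder i 0 B) (\<lambda>_. u)"
    using cylinder_in_sets[OF B] by simp
  then show ?case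
    by (simp add: cylinder_def indicator_def space_PiM)
next
  case (Suc m)
  have "emeasure (distr (chain_kernel \<psi> (Suc i) m y) seq_borel (\<lambda>x. x(i := u)))
        (cylinder i (Suc m) B)
      = indicator (B i) u * emeasure (chain_kernel \<psi> (Suc i) m y) (cylinder (Suc i) m B)" for y
  proof -
    have "(\<lambda>x. x(i := u)) -` cylinder i (Suc m) B \<inter> space (chain_kernel \<psi> (Suc i) m y)
        = (if u \<in> B i then cylinder (Suc i) m B else {})"
      by (auto simp: sets_eq_imp_space_eq[OF sets_chain_kernel[OF \<psi>]] cylinder_def space_PiM
          PiE_def extensional_def)
    then show ?thesis
      using cylinder_in_sets[OF B] sets_chain_kernel[OF \<psi>]
      by (subst emeasure_distr) (auto intro!: measurable_seq_upd cong: measurable_cong_sets)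
  qed
  then have "emeasure (chain_kernel \<psi> i (Suc m) u) (cylinder i (Suc m) B)
      = (\<integral>\<^sup>+ y. indicator (B i) u * emeasure (chain_kernel \<psi> (Suc i) m y) (cylinder (Suc i) m B)
          \<partial>\<psi> (Suc i) u)"
    by (simp add: emeasure_bind_prob_algebra[OF unit_kernels_space[OF \<psi>]
          measurable_chain_kernel_step[OF measurable_chain_kernel[OF \<psi>]] cylinder_in_sets[OF B]])
  also have "\<dots> = (\<integral>\<^sup>+ y. indicator (B i) u * mc_cyl \<psi>' B (Suc i) m y \<partial>\<psi> (Suc i) u)"
    using unit_kernels_borel_prob_on[OF \<psi>, of "Suc i" u]
    by (intro nn_integral_cong_AE) (auto simp: borel_prob_on_def Suc.IH elim!: AE_mp)
  also have "\<dots> = mc_cyl \<psi>' B i (Suc m) u"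
    using agree[of "Suc i" u] Suc.prems by (cases "u \<in> B i") simp_all
  finally show ?case .
qed

lemma integral_chain_kernel_Suc:
  fixes g :: "(nat \<Rightarrow> real) \<Rightarrow> real"
  assumes \<psi>: "unit_kernels \<psi>" and g: "g \<in> borel_measurable seq_borel" and bound: "\<And>x. \<bar>g x\<bar> \<le> B"
  shows "(\<integral>x. g x \<partial>chain_kernel \<psi> i (Suc m) u)
    = (\<integral>y. (\<integral>x. g (x(i := u)) \<partial>chain_kernel \<psi> (Suc i) m y) \<partial>\<psi> (Suc i) u)"
proof -
  let ?step = "\<lambda>y. distr (chain_kernel \<psi> (Suc i) m y) seq_borel (\<lambda>x. x(i := u))"
  have step: "?step \<in> borel \<rightarrow>\<^sub>M prob_algebra seq_borel"
    by (rule measurable_chain_kernel_step[OF measurable_chain_kernel[OF \<psi>]])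
  have \<psi>_prob: "borel_prob_on {0..1} (\<psi> (Suc i) u)" by (rule unit_kernels_borel_prob_on[OF \<psi>])
  have "(\<integral>x. g x \<partial>chain_kernel \<psi> i (Suc m) u) = (\<integral>y. (\<integral>x. g x \<partial>?step y) \<partial>\<psi> (Suc i) u)"
    unfolding chain_kernel.simps
  proof (rule integral_bind[OF g])
    show "?step \<in> \<psi> (Suc i) u \<rightarrow>\<^sub>M subprob_algebra seq_borel"
      using measurable_prob_algebraD[OF step] \<psi>_prob
      by (simp add: borel_prob_on_def cong: measurable_cong_sets)
    show "finite_measure (\<psi> (Suc i) u)"
      using \<psi>_prob by (simp add: borel_prob_on_def prob_space.finite_measure)
    show "AE y in \<psi> (Suc i) u. emeasure (?step y) (space (?step y)) \<le> ennreal 1"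
    proof (intro AE_I2)
      fix y
      have "prob_space (?step y)" using measurable_space[OF step] by (simp add: space_prob_algebra)
      from prob_space.emeasure_space_1[OF this]
      show "emeasure (?step y) (space (?step y)) \<le> ennreal 1" by simp
    qed
  qed (use bound in auto)
  also have "\<dots> = (\<integral>y. (\<integral>x. g (x(i := u)) \<partial>chain_kernel \<psi> (Suc i) m y) \<partial>\<psi> (Suc i) u)"
    using sets_chain_kernel[OF \<psi>] g
    by (intro Bochner_Integration.integral_cong refl integral_distr)
      (auto intro!: measurable_seq_upd cong: measurable_cong_sets)
  finally show ?thesis .
qed

lemma abs_integral_chain_kernel_le:
  fixes g :: "(nat \<Rightarrow> real) \<Rightarrow> real"
  shows "unit_kernels \<psi> \<Longrightarrow> g \<in> borel_measurable seq_borel \<Longrightarrow> (\<And>x. \<bar>g x\<bar> \<le> B) \<Longrightarrow>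
    \<bar>\<integral>x. g x \<partial>chain_kernel \<psi> i m u\<bar> \<le> B"
  by (rule abs_integral_le[OF prob_space_chain_kernel])
    (simp_all add: sets_chain_kernel cong: measurable_cong_sets)

lemma converges_continuously_on_seq_upd:
  fixes gs :: "nat \<Rightarrow> (nat \<Rightarrow> real) \<Rightarrow> real"
  assumes gs: "converges_continuously_on UNIV gs g" and us: "us \<longlonglongrightarrow> u"
  shows "converges_continuously_on UNIV (\<lambda>n x. gs n (x(i := us n))) (\<lambda>x. g (x(i := u)))"
proof (rule converges_continuously_onI)
  fix xs x assume "xs \<longlonglongrightarrow> (x :: nat \<Rightarrow> real)"
  then have lim: "(\<lambda>n. (xs n)(i := us n)) \<longlonglongrightarrow> x(i := u)"
    using us unfolding tendsto_fun_componentwise_iff[of xs]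
      tendsto_fun_componentwise_iff[of "\<lambda>n. (xs n)(i := us n)"] by auto
  show "(\<lambda>n. gs n ((xs n)(i := us n))) \<longlonglongrightarrow> g (x(i := u))"
    by (rule converges_continuously_onD[OF gs _ _ lim]) simp_all
qed

lemma chain_kernel_integral_tendsto:
  fixes gs :: "nat \<Rightarrow> (nat \<Rightarrow> real) \<Rightarrow> real"
  assumes \<psi>s: "\<And>n. unit_kernels (\<psi>s n)" and \<psi>: "unit_kernels \<psi>"
    and conv: "\<And>j u us. j \<ge> 1 \<Longrightarrow> u \<in> {0..1} \<Longrightarrow> (\<forall>n. us n \<in> {0..1}) \<Longrightarrow> us \<longlonglongrightarrow> u \<Longrightarrow>
      weak_conv_seq (\<lambda>n. \<psi>s n j (us n)) (\<psi> j u)"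
  shows "u \<in> {0..1} \<Longrightarrow> (\<And>n. us n \<in> {0..1}) \<Longrightarrow> us \<longlonglongrightarrow> u \<Longrightarrow>
    (\<And>n. gs n \<in> borel_measurable seq_borel) \<Longrightarrow> g \<in> borel_measurable seq_borel \<Longrightarrow>
    (\<And>n x. \<bar>gs n x\<bar> \<le> B) \<Longrightarrow> (\<And>x. \<bar>g x\<bar> \<le> B) \<Longrightarrow> converges_continuously_on UNIV gs g \<Longrightarrow>
    (\<lambda>n. \<integral>x. gs n x \<partial>chain_kernel (\<psi>s n) i m (us n)) \<longlonglongrightarrow> (\<integral>x. g x \<partial>chain_kernel \<psi> i m u)"
proof (induction m arbitrary: i u us gs g)
  case 0
  have "(\<lambda>n. (\<lambda>_::nat. us n)) \<longlonglongrightarrow> (\<lambda>_. u)"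
    using 0(3) by (simp add: tendsto_fun_componentwise_iff)
  then have "(\<lambda>n. gs n (\<lambda>_. us n)) \<longlonglongrightarrow> g (\<lambda>_. u)"
    by (rule converges_continuously_onD[OF 0(8), rotated 2]) simp_all
  then show ?case using 0 by (simp add: integral_return space_PiM)
next
  case (Suc m)
  define h where "h n y = (\<integral>x. gs n (x(i := us n)) \<partial>chain_kernel (\<psi>s n) (Suc i) m y)" for n y
  define h0 where "h0 y = (\<integral>x. g (x(i := u)) \<partial>chain_kernel \<psi> (Suc i) m y)" for y
  have gs_upd: "(\<lambda>x. gs n (x(i := v))) \<in> borel_measurable seq_borel" for n v
    by (intro measurable_compose[OF _ Suc.prems(4)] measurable_seq_upd) auto
  have g_upd: "(\<lambda>x. g (x(i := v))) \<in> borel_measurable seq_borel" for v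
    by (intro measurable_compose[OF _ Suc.prems(5)] measurable_seq_upd) auto
  have "(\<lambda>n. \<integral>y. h n y \<partial>\<psi>s n (Suc i) (us n)) \<longlonglongrightarrow> (\<integral>y. h0 y \<partial>\<psi> (Suc i) u)"
  proof (rule weak_conv_seq_integral_converges_continuously
      [OF _ _ _ compact_Icc continuous_on_clamp_01 clamp_01_in_interval, where B=B])
    show "weak_conv_seq (\<lambda>n. \<psi>s n (Suc i) (us n)) (\<psi> (Suc i) u)"
      using Suc.prems by (intro conv) auto
    show "borel_prob_on {0..1} (\<psi>s n (Suc i) (us n))" "borel_prob_on {0..1} (\<psi> (Suc i) u)" for n
      using \<psi>s \<psi> by (simp_all add: unit_kernels_borel_prob_on)
    show "h n \<in> borel_measurable borel" for n
      unfolding h_def by (rule measurable_integral_kernel[OF measurable_chain_kernel[OF \<psi>s] gs_upd])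
    show "h0 \<in> borel_measurable borel"
      unfolding h0_def by (rule measurable_integral_kernel[OF measurable_chain_kernel[OF \<psi>] g_upd])
    show "\<bar>h n y\<bar> \<le> B" "\<bar>h0 y\<bar> \<le> B" for n y
      unfolding h_def h0_def
      using Suc.prems(6,7) by (intro abs_integral_chain_kernel_le \<psi>s \<psi> gs_upd g_upd; simp)+
    show "converges_continuously_on {0..1} h h0"
    proof (rule converges_continuously_onI)
      fix ys y assume ys: "\<And>n. ys n \<in> {0..1::real}" "y \<in> {0..1}" "ys \<longlonglongrightarrow> y"
      show "(\<lambda>n. h n (ys n)) \<longlonglongrightarrow> h0 y"
        unfolding h_def h0_def
        using Suc.prems(6,7)
        by (intro Suc.IH[OF ys(2,1,3) gs_upd g_upd _ _
              converges_continuously_on_seq_upd[OF Suc.prems(8,3)]]) simp_all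
    qed
  qed simp
  then show ?case
    unfolding h_def h0_def integral_chain_kernel_Suc[OF \<psi>s Suc.prems(4,6)]
      integral_chain_kernel_Suc[OF \<psi> Suc.prems(5,7)] .
qed

text \<open>The kernels of length parameters are only given for indices j \<ge> 1 and arguments in
  [0,1]; this extension makes them a family of Markov kernels on the whole real line.\<close>
definition extend_kernels :: "(nat \<Rightarrow> real \<Rightarrow> real measure) \<Rightarrow> nat \<Rightarrow> real \<Rightarrow> real measure" where
  "extend_kernels \<psi> j u = (if j = 0 then return borel 0 else \<psi> j (clamp 0 1 u))"

lemma extend_kernels_eq: "j \<ge> 1 \<Longrightarrow> u \<in> {0..1} \<Longrightarrow> extend_kernels \<psi> j u = \<psi> j u"
  by (simp add: extend_kernels_def)

lemma unit_kernels_extend_kernels: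
  assumes \<psi>: "length_params \<pi> \<psi>"
  shows "unit_kernels (extend_kernels \<psi>)"
  unfolding unit_kernels_def
proof (intro conjI allI)
  fix j
  have clamp: "clamp 0 1 \<in> borel \<rightarrow>\<^sub>M restrict_space borel {0..1::real}"
    using clamp_01_in_interval by (intro measurable_restrict_space2 borel_measurable_continuous_onI
        continuous_on_clamp_01) auto
  show "extend_kernels \<psi> j \<in> borel \<rightarrow>\<^sub>M prob_algebra borel"
  proof (cases "j = 0")
    case True
    then show ?thesis
      by (auto simp: extend_kernels_def[abs_def] space_prob_algebra prob_space_return
          intro!: measurable_const)
  next
    case False
    with \<psi> have "\<psi> j \<in> restrict_space borel {0..1} \<rightarrow>\<^sub>M prob_algebra borel"
      by (simp add: length_params_def)
    from measurable_compose[OF clamp this] False show ?thesis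
      by (simp add: extend_kernels_def[abs_def])
  qed
  fix u
  show "AE y in extend_kernels \<psi> j u. y \<in> {0..1}"
  proof (cases "j = 0")
    case True
    then have "extend_kernels \<psi> j u = return borel 0" by (simp add: extend_kernels_def)
    moreover have "AE y in return borel (0::real). y \<in> {0..1}" by (subst AE_return) auto
    ultimately show ?thesis by (simp only:)
  next
    case False
    let ?P = "\<psi> j (clamp 0 1 u)"
    have meas: "\<psi> j \<in> restrict_space borel {0..1} \<rightarrow>\<^sub>M prob_algebra borel"
      and one: "emeasure ?P {0..1} = 1"
      using \<psi> False clamp_01_in_interval[of u] by (auto simp: length_params_def)
    have "?P \<in> space (prob_algebra borel)"
      using clamp_01_in_interval[of u]
      by (intro measurable_space[OF meas]) (simp add: space_restrict_space)
    with one have "AE y in ?P. y \<in> {0..1}"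
      by (intro AE_of_emeasure_eq_1) (simp_all add: space_prob_algebra)
    with False show ?thesis by (simp only: extend_kernels_def if_False)
  qed
qed

lemma distr_truncate_eqI:
  fixes P Q :: "(nat \<Rightarrow> real) measure"
  assumes P: "sets P = sets seq_borel" "finite_measure P" and Q: "sets Q = sets seq_borel"
    and cylinders: "\<And>B. (\<And>l. B l \<in> sets borel) \<Longrightarrow>
      emeasure P (cylinder 0 k B) = emeasure Q (cylinder 0 k B)"
  shows "distr P seq_borel (truncate k) = distr Q seq_borel (truncate k)"
proof (rule measure_eqI_PiM_infinite)
  show "sets (distr P seq_borel (truncate k)) = sets seq_borel"
    "sets (distr Q seq_borel (truncate k)) = sets seq_borel" by simp_all
  show "finite_measure (distr P seq_borel (truncate k))"
    using P by (intro finite_measure.finite_measure_distr) (simp_all cong: measurable_cong_sets)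
  fix A and J :: "nat set"
  assume J: "finite J" "J \<subseteq> UNIV" and A: "\<And>i. i \<in> J \<Longrightarrow> A i \<in> sets (borel :: real measure)"
  define X where "X = prod_emb UNIV (\<lambda>_. borel :: real measure) J (Pi\<^sub>E J A)"
  have X: "X \<in> sets seq_borel" unfolding X_def using J A by (intro sets_PiM_I) auto
  define B where "B l = (if l \<in> J then A l else UNIV)" for l
  have B: "B l \<in> sets borel" for l using A by (simp add: B_def)
  \<comment> \<open>A truncated path lies in the rectangle X iff its first k + 1 coordinates lie in B,
    unless some constraint beyond k excludes the padding value 0.\<close>
  have preimage: "truncate k -` X \<inter> space seq_borel
      = (if \<exists>j\<in>J. k < j \<and> 0 \<notin> A j then {} else cylinder 0 k B)"
    by (auto simp: X_def prod_emb_iff space_seq_borel truncate_def cylinder_def B_def PiE_def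
        extensional_def Pi_iff split: if_splits; force)
  have distr_eq: "emeasure (distr M seq_borel (truncate k)) X
      = emeasure M (truncate k -` X \<inter> space seq_borel)"
    if "sets M = sets seq_borel" for M
    using X that
    by (simp add: emeasure_distr measurable_cong_sets[OF that refl] sets_eq_imp_space_eq[OF that])
  show "emeasure (distr P seq_borel (truncate k)) X = emeasure (distr Q seq_borel (truncate k)) X"
    unfolding distr_eq[OF P(1)] distr_eq[OF Q] preimage using cylinders[OF B] by simp
qed

lemma length_params_borel_prob_on: "length_params \<pi> \<psi> \<Longrightarrow> borel_prob_on {0..1} \<pi>"
  using AE_of_emeasure_eq_1[of \<pi> "{0..1}"] unfolding length_params_def borel_prob_on_def by auto

lemma markov_chain_law_distr_truncate:
  assumes \<mu>: "markov_chain_law \<pi> \<psi> \<mu>" and params: "length_params \<pi> \<psi>"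
  shows "distr \<mu> seq_borel (truncate k)
    = distr (\<pi> \<bind> chain_kernel (extend_kernels \<psi>) 0 k) seq_borel (truncate k)"
proof (rule distr_truncate_eqI)
  have \<pi>: "\<pi> \<in> space (prob_algebra borel)"
    using params by (simp add: length_params_def space_prob_algebra)
  note kernel = measurable_chain_kernel[OF unit_kernels_extend_kernels[OF params], of 0 k]
  show sets_\<mu>: "sets \<mu> = sets seq_borel" and "finite_measure \<mu>"
    using \<mu> by (simp_all add: markov_chain_law_def prob_space.finite_measure)
  show "sets (\<pi> \<bind> chain_kernel (extend_kernels \<psi>) 0 k) = sets seq_borel"
    by (rule sets_bind'[OF \<pi> kernel])
  fix B :: "nat \<Rightarrow> real set" assume B: "\<And>l. B l \<in> sets borel"
  have "cylinder 0 k B = {x \<in> space \<mu>. \<forall>i\<le>k. x i \<in> B i}"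
    by (auto simp: cylinder_def sets_eq_imp_space_eq[OF sets_\<mu>])
  then have "emeasure \<mu> (cylinder 0 k B) = (\<integral>\<^sup>+ u. mc_cyl \<psi> B 0 k u \<partial>\<pi>)"
    using \<mu> B by (simp add: markov_chain_law_def)
  also have "\<dots> = (\<integral>\<^sup>+ u. emeasure (chain_kernel (extend_kernels \<psi>) 0 k u) (cylinder 0 k B) \<partial>\<pi>)"
    using length_params_borel_prob_on[OF params]
      emeasure_chain_kernel_cylinder[OF unit_kernels_extend_kernels[OF params] extend_kernels_eq B]
    unfolding borel_prob_on_def by (intro nn_integral_cong_AE) (auto elim!: AE_mp)
  also have "\<dots> = emeasure (\<pi> \<bind> chain_kernel (extend_kernels \<psi>) 0 k) (cylinder 0 k B)"
    by (rule emeasure_bind_prob_algebra[OF \<pi> kernel cylinder_in_sets[OF B], symmetric])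
  finally show "emeasure \<mu> (cylinder 0 k B)
    = emeasure (\<pi> \<bind> chain_kernel (extend_kernels \<psi>) 0 k) (cylinder 0 k B)" .
qed

lemma markov_chain_law_integral_truncate:
  fixes g :: "(nat \<Rightarrow> real) \<Rightarrow> real"
  assumes \<mu>: "markov_chain_law \<pi> \<psi> \<mu>" and params: "length_params \<pi> \<psi>"
    and g: "g \<in> borel_measurable seq_borel" and bound: "\<And>x. \<bar>g x\<bar> \<le> B"
  shows "(\<integral>x. g (truncate k x) \<partial>\<mu>)
    = (\<integral>u. (\<integral>x. g (truncate k x) \<partial>chain_kernel (extend_kernels \<psi>) 0 k u) \<partial>\<pi>)"
proof -
  let ?Q = "\<pi> \<bind> chain_kernel (extend_kernels \<psi>) 0 k"
  note kernel = measurable_chain_kernel[OF unit_kernels_extend_kernels[OF params], of 0 k]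
  have sets_\<pi>: "sets \<pi> = sets borel" and sets_\<mu>: "sets \<mu> = sets seq_borel"
    using params \<mu> by (simp_all add: length_params_def markov_chain_law_def)
  have sets_Q: "sets ?Q = sets seq_borel"
    using params by (intro sets_bind'[OF _ kernel]) (simp add: length_params_def space_prob_algebra)
  have "(\<integral>x. g (truncate k x) \<partial>\<mu>) = (\<integral>x. g x \<partial>distr \<mu> seq_borel (truncate k))"
    using sets_\<mu> g by (intro integral_distr[symmetric]) (simp_all cong: measurable_cong_sets)
  also have "\<dots> = (\<integral>x. g x \<partial>distr ?Q seq_borel (truncate k))"
    by (simp add: markov_chain_law_distr_truncate[OF \<mu> params])
  also have "\<dots> = (\<integral>x. g (truncate k x) \<partial>?Q)"
    using sets_Q g by (intro integral_distr) (simp_all cong: measurable_cong_sets)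
  also have "\<dots> = (\<integral>u. (\<integral>x. g (truncate k x) \<partial>chain_kernel (extend_kernels \<psi>) 0 k u) \<partial>\<pi>)"
  proof (rule integral_bind)
    show "(\<lambda>x. g (truncate k x)) \<in> borel_measurable seq_borel" using g by simp
    show "chain_kernel (extend_kernels \<psi>) 0 k \<in> \<pi> \<rightarrow>\<^sub>M subprob_algebra seq_borel"
      using measurable_prob_algebraD[OF kernel] by (simp cong: measurable_cong_sets add: sets_\<pi>)
    show "finite_measure \<pi>"
      using params by (simp add: length_params_def prob_space.finite_measure)
    show "AE u in \<pi>. emeasure (chain_kernel (extend_kernels \<psi>) 0 k u)
        (space (chain_kernel (extend_kernels \<psi>) 0 k u)) \<le> ennreal 1"
      by (simp add: prob_space.emeasure_space_1[OF prob_space_chain_kernel[OF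
            unit_kernels_extend_kernels[OF params]]])
  qed (use bound in auto)
  finally show ?thesis .
qed

lemma markov_chain_law_truncate_tendsto:
  fixes f :: "(nat \<Rightarrow> real) \<Rightarrow> real"
  assumes \<mu>s: "\<And>n. markov_chain_law (\<pi>s n) (\<psi>s n) (\<mu>s n)" "\<And>n. length_params (\<pi>s n) (\<psi>s n)"
    and \<mu>: "markov_chain_law \<pi> \<psi> \<mu>" "length_params \<pi> \<psi>"
    and conv_\<pi>: "weak_conv_seq \<pi>s \<pi>"
    and conv_\<psi>: "\<And>j u us. j \<ge> 1 \<Longrightarrow> u \<in> {0..1} \<Longrightarrow> (\<forall>n. us n \<in> {0..1}) \<Longrightarrow> us \<longlonglongrightarrow> u \<Longrightarrow>
      weak_conv_seq (\<lambda>n. \<psi>s n j (us n)) (\<psi> j u)"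
    and f: "continuous_on UNIV f" "\<And>x. \<bar>f x\<bar> \<le> c"
  shows "(\<lambda>n. \<integral>x. f (truncate k x) \<partial>\<mu>s n) \<longlonglongrightarrow> (\<integral>x. f (truncate k x) \<partial>\<mu>)"
proof -
  let ?g = "\<lambda>x. f (truncate k x)"
  let ?I = "\<lambda>\<psi> u. \<integral>x. ?g x \<partial>chain_kernel (extend_kernels \<psi>) 0 k u"
  have f_meas: "f \<in> borel_measurable seq_borel"
    using f(1) by (intro borel_measurable_seq_borel borel_measurable_continuous_onI)
  have g: "continuous_on UNIV ?g" "?g \<in> borel_measurable seq_borel"
    using continuous_on_compose2[OF f(1) continuous_on_truncate] f_meas by auto
  note kernels = unit_kernels_extend_kernels[OF \<mu>s(2)] unit_kernels_extend_kernels[OF \<mu>(2)]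
  have "(\<lambda>n. \<integral>u. ?I (\<psi>s n) u \<partial>\<pi>s n) \<longlonglongrightarrow> (\<integral>u. ?I \<psi> u \<partial>\<pi>)"
  proof (rule weak_conv_seq_integral_converges_continuously
      [OF conv_\<pi> _ _ compact_Icc continuous_on_clamp_01 clamp_01_in_interval, where B=c])
    show "borel_prob_on {0..1} (\<pi>s n)" "borel_prob_on {0..1} \<pi>" for n
      by (rule length_params_borel_prob_on[OF \<mu>s(2)], rule length_params_borel_prob_on[OF \<mu>(2)])
    show "?I (\<psi>s n) \<in> borel_measurable borel" "?I \<psi> \<in> borel_measurable borel" for n
      by (rule measurable_integral_kernel[OF measurable_chain_kernel[OF kernels(1)] g(2)],
          rule measurable_integral_kernel[OF measurable_chain_kernel[OF kernels(2)] g(2)])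
    show "\<bar>?I (\<psi>s n) u\<bar> \<le> c" "\<bar>?I \<psi> u\<bar> \<le> c" for n u
      by (rule abs_integral_chain_kernel_le[OF kernels(1) g(2) f(2)],
          rule abs_integral_chain_kernel_le[OF kernels(2) g(2) f(2)])
    show "converges_continuously_on {0..1} (\<lambda>n. ?I (\<psi>s n)) (?I \<psi>)"
    proof (rule converges_continuously_onI)
      fix us u assume us: "\<And>n. us n \<in> {0..1::real}" "u \<in> {0..1}" "us \<longlonglongrightarrow> u"
      have conv_ext: "weak_conv_seq (\<lambda>n. extend_kernels (\<psi>s n) j (vs n)) (extend_kernels \<psi> j v)"
        if "j \<ge> 1" "v \<in> {0..1}" "\<forall>n. vs n \<in> {0..1}" "vs \<longlonglongrightarrow> v" for j v vs
        using conv_\<psi>[OF that] that by (simp add: extend_kernels_eq)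
      show "(\<lambda>n. ?I (\<psi>s n) (us n)) \<longlonglongrightarrow> ?I \<psi> u"
        using f(2) by (intro chain_kernel_integral_tendsto[OF kernels conv_ext us(2,1,3) g(2) g(2)]
            converges_continuously_on_const g(1))
    qed
  qed simp
  then show ?thesis
    by (simp add: markov_chain_law_integral_truncate[OF \<mu>s(1,2) f_meas f(2)]
        markov_chain_law_integral_truncate[OF \<mu> f_meas f(2)])
qed

lemma weak_conv_seq_markov_chain_law:
  assumes \<mu>s: "\<And>n. markov_chain_law (\<pi>s n) (\<psi>s n) (\<mu>s n)" "\<And>n. length_params (\<pi>s n) (\<psi>s n)"
      "\<And>n. borel_prob_on unit_cube (\<mu>s n)"
    and \<mu>: "markov_chain_law \<pi> \<psi> \<mu>" "length_params \<pi> \<psi>" "borel_prob_on unit_cube \<mu>"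
    and conv_\<pi>: "weak_conv_seq \<pi>s \<pi>"
    and conv_\<psi>: "\<And>j u us. j \<ge> 1 \<Longrightarrow> u \<in> {0..1} \<Longrightarrow> (\<forall>n. us n \<in> {0..1}) \<Longrightarrow> us \<longlonglongrightarrow> u \<Longrightarrow>
      weak_conv_seq (\<lambda>n. \<psi>s n j (us n)) (\<psi> j u)"
  shows "weak_conv_seq \<mu>s \<mu>"
proof (rule weak_conv_seq_of_truncations[OF \<mu>s(3) \<mu>(3)])
  fix f :: "(nat \<Rightarrow> real) \<Rightarrow> real" and k
  assume f: "continuous_on UNIV f" "bounded (range f)"
  then obtain c where "\<And>x. \<bar>f x\<bar> \<le> c" unfolding bounded_real by blast
  then show "(\<lambda>n. \<integral>x. f (truncate k x) \<partial>\<mu>s n) \<longlonglongrightarrow> (\<integral>x. f (truncate k x) \<partial>\<mu>)"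
    using markov_chain_law_truncate_tendsto[OF \<mu>s(1,2) \<mu>(1,2) conv_\<pi> conv_\<psi> f(1)] by blast
qed

section \<open>Stick-breaking weights and measures\<close>

lemma sum_sb_weights: "(\<Sum>j<N. sb_weights v j) = 1 - (\<Prod>i<N. 1 - v i)"
  by (induction N) (simp_all add: sb_weights_def algebra_simps)

lemma sb_weights_nonneg: "v \<in> unit_cube \<Longrightarrow> 0 \<le> sb_weights v j"
  unfolding sb_weights_def unit_cube_def by (auto intro!: mult_nonneg_nonneg prod_nonneg)

lemma prod_one_minus_nonneg: "v \<in> unit_cube \<Longrightarrow> 0 \<le> (\<Prod>i<N. 1 - v i)"
  unfolding unit_cube_def by (auto intro!: prod_nonneg)

lemma summable_sb_weights: "v \<in> unit_cube \<Longrightarrow> summable (sb_weights v)"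
  by (rule summableI_nonneg_bounded[where x=1])
    (auto simp: sb_weights_nonneg sum_sb_weights prod_one_minus_nonneg)

lemma suminf_sb_weights_le: "v \<in> unit_cube \<Longrightarrow> suminf (sb_weights v) \<le> 1"
  by (rule suminf_le_const[OF summable_sb_weights])
    (auto simp: sum_sb_weights prod_one_minus_nonneg)

lemma continuous_on_sb_weights_component: "continuous_on UNIV (\<lambda>v. sb_weights v j)"
  unfolding sb_weights_def by (intro continuous_intros continuous_on_product_coordinates)

lemma continuous_on_sb_weights: "continuous_on UNIV sb_weights"
  by (rule continuous_on_coordinatewise_then_product) (rule continuous_on_sb_weights_component)

lemma measurable_sb_weights: "sb_weights \<in> seq_borel \<rightarrow>\<^sub>M seq_borel"
  unfolding sb_weights_def[abs_def] by (rule measurable_PiM_single') auto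

lemma weak_conv_seq_sb_weights:
  assumes conv_V: "weak_conv_seq (\<lambda>n. distr (Mn n) seq_borel (Vn n)) (distr M seq_borel V)"
    and V: "\<And>n. Vn n \<in> Mn n \<rightarrow>\<^sub>M seq_borel" "V \<in> M \<rightarrow>\<^sub>M seq_borel"
  shows "weak_conv_seq (\<lambda>n. distr (Mn n) seq_borel (\<lambda>\<omega>. sb_weights (Vn n \<omega>)))
    (distr M seq_borel (\<lambda>\<omega>. sb_weights (V \<omega>)))"
proof -
  have "weak_conv_seq (\<lambda>n. distr (distr (Mn n) seq_borel (Vn n)) seq_borel sb_weights)
      (distr (distr M seq_borel V) seq_borel sb_weights)"
    by (rule weak_conv_seq_distr[OF conv_V _ _ measurable_sb_weights continuous_on_sb_weights])
      simp_all
  then show ?thesis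
    using V by (simp add: distr_distr[OF measurable_sb_weights] o_def)
qed

lemma integral_mixture:
  fixes f :: "'a \<Rightarrow> real"
  assumes p: "\<And>j. 0 \<le> p j" "p sums 1"
    and K: "\<And>j. prob_space (K j)" "\<And>j. sets (K j) = sets N"
    and f: "f \<in> borel_measurable N" "\<And>x. \<bar>f x\<bar> \<le> c"
  shows "(\<integral>x. f x \<partial>(density (count_space UNIV) (\<lambda>j. ennreal (p j)) \<bind> K))
    = (\<Sum>j. p j * (\<integral>x. f x \<partial>K j))"
proof -
  let ?D = "density (count_space UNIV) (\<lambda>j. ennreal (p j))"
  have K_meas: "K \<in> ?D \<rightarrow>\<^sub>M subprob_algebra N"
    using K by (auto simp: measurable_count_space_eq1 space_subprob_algebra
        prob_space_imp_subprob_space cong: measurable_cong_sets)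
  have "emeasure ?D (space ?D) = (\<Sum>j. ennreal (p j))"
    by (simp add: emeasure_density nn_integral_count_space_nat)
  also have "\<dots> = 1"
    using suminf_ennreal2[OF p(1) sums_summable[OF p(2)]] sums_unique[OF p(2)] by simp
  finally have D: "finite_measure ?D" by (intro finite_measureI) simp
  have K_bound: "\<bar>\<integral>x. f x \<partial>K j\<bar> \<le> c" for j
    using K f by (intro abs_integral_le) (auto cong: measurable_cong_sets)
  have summable: "summable (\<lambda>j. norm (p j * (\<integral>x. f x \<partial>K j)))"
    using K_bound p(1)
    by (intro summable_comparison_test'
        [OF summable_mult2[OF sums_summable[OF p(2)], of c], where N=0])
      (simp add: abs_mult mult_left_mono)
  have "(\<integral>x. f x \<partial>(?D \<bind> K)) = (\<integral>j. (\<integral>x. f x \<partial>K j) \<partial>?D)"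
  proof (rule integral_bind[OF f(1) _ K_meas D])
    show "AE j in ?D. emeasure (K j) (space (K j)) \<le> ennreal 1"
      using K by (simp add: prob_space.emeasure_space_1)
  qed (use f in auto)
  also have "\<dots> = (\<integral>j. p j * (\<integral>x. f x \<partial>K j) \<partial>count_space UNIV)"
    using p(1) by (subst integral_density) simp_all
  also have "\<dots> = (\<Sum>j. p j * (\<integral>x. f x \<partial>K j))"
    using summable by (intro integral_count_space_nat) (simp add: integrable_count_space_nat_iff)
  finally show ?thesis .
qed

definition sb_mixture_weights :: "(nat \<Rightarrow> real) \<Rightarrow> nat \<Rightarrow> real" where
  "sb_mixture_weights w j = (case j of 0 \<Rightarrow> 1 - suminf w | Suc i \<Rightarrow> w i)"

definition sb_mixture_components ::
    "(nat \<Rightarrow> 'a::topological_space) \<Rightarrow> 'a measure \<Rightarrow> nat \<Rightarrow> 'a measure" where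
  "sb_mixture_components \<theta> P0 j = (case j of 0 \<Rightarrow> P0 | Suc i \<Rightarrow> return borel (\<theta> i))"

lemma sb_mixture_weights_sums: "summable w \<Longrightarrow> sb_mixture_weights w sums 1"
  using sums_Suc[of "sb_mixture_weights w" "suminf w"]
  by (simp add: sb_mixture_weights_def summable_sums)

lemma sb_mixture_components_prob:
  assumes "prob_space P0" "sets P0 = sets borel"
  shows "prob_space (sb_mixture_components \<theta> P0 j)"
    "sets (sb_mixture_components \<theta> P0 j) = sets borel"
  using assms by (simp_all add: sb_mixture_components_def prob_space_return split: nat.split)

lemma sb_measure_eq_mixture:
  fixes \<theta> :: "nat \<Rightarrow> 'a::topological_space"
  assumes w: "summable w" and P0: "prob_space P0" "sets P0 = sets borel"
  shows "sb_measure w \<theta> P0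
    = density (count_space UNIV) (\<lambda>j. ennreal (sb_mixture_weights w j))
        \<bind> sb_mixture_components \<theta> P0"
proof -
  let ?D = "density (count_space UNIV) (\<lambda>j. ennreal (sb_mixture_weights w j))"
  let ?K = "sb_mixture_components \<theta> P0"
  have K_meas: "?K \<in> ?D \<rightarrow>\<^sub>M subprob_algebra borel"
    using sb_mixture_components_prob[OF P0]
    by (auto simp: measurable_count_space_eq1 space_subprob_algebra prob_space_imp_subprob_space
        cong: measurable_cong_sets)
  have sets: "sets (?D \<bind> ?K) = sets borel"
    by (simp add: sets_kernel[OF K_meas])
  have "emeasure (?D \<bind> ?K) A
      = (\<Sum>j. ennreal (w j) * indicator A (\<theta> j)) + ennreal (1 - (\<Sum>j. w j)) * emeasure P0 A"
    if A: "A \<in> sets borel" for A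
  proof -
    have "emeasure (?D \<bind> ?K) A = (\<Sum>j. ennreal (sb_mixture_weights w j) * emeasure (?K j) A)"
      using A
      by (simp add: emeasure_bind[OF _ K_meas] nn_integral_density nn_integral_count_space_nat)
    also have "\<dots> = (\<Sum>j. ennreal (sb_mixture_weights w (Suc j)) * emeasure (?K (Suc j)) A)
        + ennreal (sb_mixture_weights w 0) * emeasure (?K 0) A"
      by (rule sums_unique[symmetric], rule sums_Suc, rule summable_sums) simp
    finally show ?thesis
      using A by (simp add: sb_mixture_weights_def sb_mixture_components_def)
  qed
  then have "sb_measure w \<theta> P0 = measure_of UNIV (sets borel) (emeasure (?D \<bind> ?K))"
    unfolding sb_measure_def
    by (intro measure_of_eq) (auto simp: sets.sigma_sets_eq[of borel, simplified])
  also have "\<dots> = ?D \<bind> ?K"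
    using measure_of_of_measure[of "?D \<bind> ?K"] sets_eq_imp_space_eq[OF sets] by (simp add: sets)
  finally show ?thesis .
qed

lemma integral_sb_measure:
  fixes \<theta> :: "nat \<Rightarrow> 'a::topological_space" and f :: "'a \<Rightarrow> real"
  assumes w: "\<And>j. 0 \<le> w j" "summable w" "suminf w \<le> 1"
    and P0: "prob_space P0" "sets P0 = sets borel"
    and f: "f \<in> borel_measurable borel" "\<And>x. \<bar>f x\<bar> \<le> c"
  shows "(\<integral>x. f x \<partial>sb_measure w \<theta> P0) = (\<Sum>j. w j * f (\<theta> j)) + (1 - suminf w) * (\<integral>x. f x \<partial>P0)"
proof -
  let ?q = "\<lambda>j. sb_mixture_weights w j * (\<integral>x. f x \<partial>sb_mixture_components \<theta> P0 j)"
  have weights_nonneg: "0 \<le> sb_mixture_weights w j" for j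
    using w by (simp add: sb_mixture_weights_def split: nat.split)
  have "(\<integral>x. f x \<partial>sb_measure w \<theta> P0) = (\<Sum>j. ?q j)"
    unfolding sb_measure_eq_mixture[OF w(2) P0]
    by (rule integral_mixture[OF weights_nonneg sb_mixture_weights_sums[OF w(2)]
          sb_mixture_components_prob[OF P0] f])
  also have "\<dots> = (\<Sum>j. ?q (Suc j)) + ?q 0"
  proof -
    have "\<bar>\<integral>x. f x \<partial>sb_mixture_components \<theta> P0 j\<bar> \<le> c" for j
      using sb_mixture_components_prob[OF P0] f
      by (intro abs_integral_le) (auto cong: measurable_cong_sets)
    then have "summable ?q"
      using weights_nonneg
      by (intro summable_comparison_test'[OF summable_mult2[OF sums_summable[OF
            sb_mixture_weights_sums[OF w(2)]], of c], where N=0])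
        (simp add: abs_mult mult_left_mono)
    from suminf_split_head[OF this] show ?thesis by simp
  qed
  also have "\<dots> = (\<Sum>j. w j * f (\<theta> j)) + (1 - suminf w) * (\<integral>x. f x \<partial>P0)"
    using f by (simp add: sb_mixture_weights_def sb_mixture_components_def integral_return)
  finally show ?thesis .
qed

definition sb_integral ::
    "('a::topological_space \<Rightarrow> real) \<Rightarrow> 'a measure \<Rightarrow> (nat \<Rightarrow> real) \<Rightarrow> (nat \<Rightarrow> 'a) \<Rightarrow> real" where
  "sb_integral f P0 v \<theta> = (\<integral>x. f x \<partial>sb_measure (sb_weights v) \<theta> P0)"

lemma sb_integral_eq:
  assumes v: "v \<in> unit_cube" and P0: "prob_space P0" "sets P0 = sets borel"
    and f: "f \<in> borel_measurable borel" "\<And>x. \<bar>f x\<bar> \<le> c"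
  shows "sb_integral f P0 v \<theta>
    = (\<Sum>j. sb_weights v j * f (\<theta> j)) + (1 - suminf (sb_weights v)) * (\<integral>x. f x \<partial>P0)"
  unfolding sb_integral_def
  using sb_weights_nonneg[OF v] summable_sb_weights[OF v] suminf_sb_weights_le[OF v] P0 f
  by (rule integral_sb_measure)

lemma abs_sb_integral_minus_partial_sum_le:
  assumes v: "v \<in> unit_cube" and P0: "prob_space P0" "sets P0 = sets borel"
    and f: "f \<in> borel_measurable borel" "\<And>x. \<bar>f x\<bar> \<le> c"
    and proper: "sb_weights v sums 1"
  shows "\<bar>sb_integral f P0 v \<theta> - (\<Sum>j<N. sb_weights v j * f (\<theta> j))\<bar> \<le> c * (\<Prod>i<N. 1 - v i)"
proof -
  let ?w = "sb_weights v"
  have bound: "\<bar>?w j * f (\<theta> j)\<bar> \<le> ?w j * c" for j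
    using sb_weights_nonneg[OF v, of j] f(2)[of "\<theta> j"] by (simp add: abs_mult mult_left_mono)
  have summable: "summable (\<lambda>j. ?w j * f (\<theta> j))"
    using bound
    by (intro summable_comparison_test'
        [OF summable_mult2[OF summable_sb_weights[OF v], of c], where N=0])
      simp
  have summable_tail: "summable (\<lambda>j. ?w (j + N) * c)"
    using summable_mult2[OF summable_sb_weights[OF v]] by (rule summable_ignore_initial_segment)
  have summable_abs_tail: "summable (\<lambda>j. \<bar>?w (j + N) * f (\<theta> (j + N))\<bar>)"
    using bound by (intro summable_comparison_test'[OF summable_tail, where N=0]) simp
  have "sb_integral f P0 v \<theta> - (\<Sum>j<N. ?w j * f (\<theta> j)) = (\<Sum>j. ?w (j + N) * f (\<theta> (j + N)))"
    using sb_integral_eq[OF v P0 f] sums_unique[OF proper]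
      suminf_split_initial_segment[OF summable, of N]
    by simp
  also have "\<bar>\<dots>\<bar> \<le> (\<Sum>j. ?w (j + N) * c)"
    using summable_rabs[OF summable_abs_tail] suminf_le[OF bound summable_abs_tail summable_tail]
    by linarith
  also have "\<dots> = (\<Sum>j. ?w (j + N)) * c"
    by (rule suminf_mult2[OF summable_ignore_initial_segment[OF summable_sb_weights[OF v]],
          symmetric])
  also have "\<dots> = (1 - (\<Sum>j<N. ?w j)) * c"
    using suminf_split_initial_segment[OF summable_sb_weights[OF v], of N] sums_unique[OF proper]
    by simp
  finally show ?thesis by (simp add: sum_sb_weights mult.commute)
qed

lemma measurable_sb_integral:
  fixes \<Theta> :: "'w \<Rightarrow> nat \<Rightarrow> 'a::topological_space"
  assumes P0: "prob_space P0" "sets P0 = sets borel"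
    and f: "f \<in> borel_measurable borel" "\<And>x. \<bar>f x\<bar> \<le> c"
    and V\<Theta>: "(\<lambda>\<omega>. (V \<omega>, \<Theta> \<omega>)) \<in> M \<rightarrow>\<^sub>M seq_borel \<Otimes>\<^sub>M seq_borel"
    and V: "\<And>\<omega>. \<omega> \<in> space M \<Longrightarrow> V \<omega> \<in> unit_cube"
  shows "(\<lambda>\<omega>. sb_integral f P0 (V \<omega>) (\<Theta> \<omega>)) \<in> borel_measurable M"
proof -
  \<comment> \<open>On the unit cube, the integral equals an expression that is measurable on the whole space.\<close>
  define G where "G p = (\<Sum>j. sb_weights (clamp_cube (fst p)) j * f (snd p j))
    + (1 - suminf (sb_weights (clamp_cube (fst p)))) * (\<integral>x. f x \<partial>P0)"
    for p :: "(nat \<Rightarrow> real) \<times> (nat \<Rightarrow> 'a)"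
  have "G \<in> borel_measurable (seq_borel \<Otimes>\<^sub>M seq_borel)"
    using f(1) unfolding G_def sb_weights_def clamp_cube_def by measurable
  from measurable_compose[OF V\<Theta> this] show ?thesis
    by (rule measurable_cong[THEN iffD1, rotated])
      (simp add: G_def sb_integral_eq[OF V P0 f] clamp_cube_id[OF V])
qed

section \<open>Independence and characteristic functions\<close>

lemma integral_indep_pair:
  fixes \<Phi> :: "'a \<times> 'b \<Rightarrow> complex"
  assumes M: "prob_space M" and XY: "(\<lambda>\<omega>. (X \<omega>, Y \<omega>)) \<in> M \<rightarrow>\<^sub>M A \<Otimes>\<^sub>M B"
    and indep: "distr M (A \<Otimes>\<^sub>M B) (\<lambda>\<omega>. (X \<omega>, Y \<omega>)) = distr M A X \<Otimes>\<^sub>M Q"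
    and Q: "prob_space Q" "sets Q = sets B"
    and \<Phi>: "\<Phi> \<in> borel_measurable (A \<Otimes>\<^sub>M B)" "\<And>p. cmod (\<Phi> p) \<le> 1"
  shows "(\<integral>\<omega>. \<Phi> (X \<omega>, Y \<omega>) \<partial>M) = (\<integral>x. (\<integral>y. \<Phi> (x, y) \<partial>Q) \<partial>distr M A X)"
proof -
  have X: "X \<in> M \<rightarrow>\<^sub>M A" using measurable_compose[OF XY measurable_fst] by simp
  interpret Q: prob_space Q by (rule Q(1))
  interpret MX: prob_space "distr M A X" using M X by (rule prob_space.prob_space_distr)
  interpret pair_prob_space "distr M A X" Q ..
  have sets_pair: "sets (distr M A X \<Otimes>\<^sub>M Q) = sets (A \<Otimes>\<^sub>M B)"
    using Q(2) by (intro sets_pair_measure_cong) simp_all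
  have "integrable (distr M A X \<Otimes>\<^sub>M Q) \<Phi>"
    using \<Phi> by (intro integrable_const_bound[where B=1])
      (simp_all add: measurable_cong_sets[OF sets_pair refl])
  have "(\<integral>\<omega>. \<Phi> (X \<omega>, Y \<omega>) \<partial>M) = (\<integral>p. \<Phi> p \<partial>distr M (A \<Otimes>\<^sub>M B) (\<lambda>\<omega>. (X \<omega>, Y \<omega>)))"
    by (rule integral_distr[OF XY \<Phi>(1), symmetric])
  also have "\<dots> = (\<integral>x. (\<integral>y. \<Phi> (x, y) \<partial>Q) \<partial>distr M A X)"
    unfolding indep by (rule integral_fst'[symmetric]) fact
  finally show ?thesis .
qed

lemma integral_prod_iid:
  fixes g :: "nat \<Rightarrow> 'a \<Rightarrow> complex"
  assumes P: "prob_space P" and g: "\<And>j. integrable P (g j)"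
  shows "(\<integral>\<theta>. (\<Prod>j<N. g j (\<theta> j)) \<partial>PiM UNIV (\<lambda>_. P)) = (\<Prod>j<N. \<integral>x. g j x \<partial>P)"
proof -
  interpret prob_space P by fact
  interpret product_prob_space "\<lambda>_. P" UNIV by unfold_locales
  have g_meas[measurable]: "g j \<in> borel_measurable P" for j
    by (rule borel_measurable_integrable[OF g])
  have "(\<integral>\<theta>. (\<Prod>j<N. g j (\<theta> j)) \<partial>PiM UNIV (\<lambda>_. P))
      = (\<integral>\<theta>. (\<Prod>j<N. g j (restrict \<theta> {..<N} j)) \<partial>PiM UNIV (\<lambda>_. P))"
    by simp
  also have "\<dots> = (\<integral>\<theta>. (\<Prod>j<N. g j (\<theta> j))
      \<partial>distr (PiM UNIV (\<lambda>_. P)) (PiM {..<N} (\<lambda>_. P)) (\<lambda>\<theta>. restrict \<theta> {..<N}))"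
    by (rule integral_distr[symmetric]) measurable
  also have "\<dots> = (\<integral>\<theta>. (\<Prod>j<N. g j (\<theta> j)) \<partial>PiM {..<N} (\<lambda>_. P))"
    by (simp add: distr_PiM_restrict_finite)
  also have "\<dots> = (\<Prod>j<N. \<integral>x. g j x \<partial>P)"
    by (rule product_integral_prod) (simp_all add: g)
  finally show ?thesis .
qed

lemma iexp_mult_sum: "iexp (t * (\<Sum>j<(N::nat). a j)) = (\<Prod>j<N. iexp (t * a j))"
proof -
  have "iexp (t * (\<Sum>j<N. a j)) = exp (\<Sum>j<N. \<i> * complex_of_real (t * a j))"
    by (simp add: sum_distrib_left of_real_sum)
  also have "\<dots> = (\<Prod>j<N. iexp (t * a j))" by (rule exp_sum) simp
  finally show ?thesis .
qed

lemma cmod_iexp_diff_le: "cmod (iexp a - iexp b) \<le> \<bar>a - b\<bar>"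
proof -
  have "iexp a - iexp b = iexp b * (iexp (a - b) - 1)"
    by (simp add: algebra_simps exp_add[symmetric] of_real_diff)
  then have "cmod (iexp a - iexp b) = cmod (iexp (a - b) - 1)"
    by (simp add: norm_mult norm_exp_i_times)
  also have "\<dots> \<le> \<bar>a - b\<bar>" using iexp_approx1[of "a - b" 0] by simp
  finally show ?thesis .
qed

definition char_fun :: "'a measure \<Rightarrow> ('a \<Rightarrow> real) \<Rightarrow> real \<Rightarrow> complex" where
  "char_fun P f s = (\<integral>\<theta>. iexp (s * f \<theta>) \<partial>P)"

lemma integrable_iexp_comp:
  assumes "prob_space P" "sets P = sets borel" "f \<in> borel_measurable borel"
  shows "integrable P (\<lambda>\<theta>. iexp (s * f \<theta>))"
  using assms by (intro prob_space.integrable_iexp) (auto cong: measurable_cong_sets)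

lemma norm_char_fun_le_1:
  assumes "prob_space P"
  shows "cmod (char_fun P f s) \<le> 1"
  using integral_norm_bound[of P "\<lambda>\<theta>. iexp (s * f \<theta>)"]
  by (simp add: char_fun_def norm_exp_i_times prob_space.prob_space[OF assms])

lemma char_fun_lipschitz:
  assumes P: "prob_space P" "sets P = sets borel"
    and f: "f \<in> borel_measurable borel" "\<And>x. \<bar>f x\<bar> \<le> c"
  shows "cmod (char_fun P f s - char_fun P f s') \<le> c * \<bar>s - s'\<bar>"
proof -
  interpret prob_space P by fact
  have "cmod (iexp (s * f \<theta>) - iexp (s' * f \<theta>)) \<le> c * \<bar>s - s'\<bar>" for \<theta>
  proof -
    have "cmod (iexp (s * f \<theta>) - iexp (s' * f \<theta>)) \<le> \<bar>s - s'\<bar> * \<bar>f \<theta>\<bar>"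
      using cmod_iexp_diff_le[of "s * f \<theta>" "s' * f \<theta>"]
      by (simp add: left_diff_distrib[symmetric] abs_mult)
    also have "\<dots> \<le> c * \<bar>s - s'\<bar>"
      using mult_right_mono[OF f(2)[of \<theta>] abs_ge_zero[of "s - s'"]] by (simp add: mult.commute)
    finally show ?thesis .
  qed
  then have "(\<integral>\<theta>. cmod (iexp (s * f \<theta>) - iexp (s' * f \<theta>)) \<partial>P) \<le> (\<integral>\<theta>. c * \<bar>s - s'\<bar> \<partial>P)"
    using integrable_iexp_comp[OF P f(1)] by (intro integral_mono) auto
  then have "cmod (\<integral>\<theta>. iexp (s * f \<theta>) - iexp (s' * f \<theta>) \<partial>P) \<le> (\<integral>\<theta>. c * \<bar>s - s'\<bar> \<partial>P)"
    by (rule order_trans[OF integral_norm_bound])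
  then show ?thesis
    using integrable_iexp_comp[OF P f(1)] by (simp add: char_fun_def prob_space)
qed

lemma continuous_on_char_fun:
  assumes "prob_space P" "sets P = sets borel" "f \<in> borel_measurable borel" "\<And>x. \<bar>f x\<bar> \<le> c"
  shows "continuous_on UNIV (char_fun P f)"
proof (rule lipschitz_on_continuous_on)
  have "0 \<le> c" using assms(4) by (rule order_trans[OF abs_ge_zero])
  then show "c-lipschitz_on UNIV (char_fun P f)"
    by (intro lipschitz_onI) (simp_all add: dist_norm char_fun_lipschitz[OF assms])
qed

lemma char_fun_tendsto:
  assumes Ps: "\<And>n. prob_space (Ps n)" "\<And>n. sets (Ps n) = sets borel"
    and P: "prob_space P" "sets P = sets borel"
    and wc: "weak_conv_seq Ps P" and f: "continuous_on UNIV f"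
  shows "(\<lambda>n. char_fun (Ps n) f s) \<longlonglongrightarrow> char_fun P f s"
proof -
  have f_meas: "f \<in> borel_measurable borel" using f by (rule borel_measurable_continuous_onI)
  have cos_sin: "Re (iexp x) = cos x" "Im (iexp x) = sin x" for x
    using Re_exp[of "\<i> * complex_of_real x"] Im_exp[of "\<i> * complex_of_real x"] by simp_all
  have Re_Im: "Re (char_fun Q f s) = (\<integral>\<theta>. cos (s * f \<theta>) \<partial>Q)"
    "Im (char_fun Q f s) = (\<integral>\<theta>. sin (s * f \<theta>) \<partial>Q)"
    if "prob_space Q" "sets Q = sets borel" for Q
    unfolding char_fun_def cos_sin[symmetric]
    by (simp_all only: integral_Re[OF integrable_iexp_comp[OF that f_meas]]
        integral_Im[OF integrable_iexp_comp[OF that f_meas]])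
  have sf: "continuous_on UNIV (\<lambda>\<theta>. s * f \<theta>)"
    by (intro continuous_on_mult continuous_on_const f)
  have "continuous_on UNIV (\<lambda>\<theta>. cos (s * f \<theta>))" "continuous_on UNIV (\<lambda>\<theta>. sin (s * f \<theta>))"
    using continuous_on_compose2[OF continuous_on_cos[OF continuous_on_id] sf]
      continuous_on_compose2[OF continuous_on_sin[OF continuous_on_id] sf] by auto
  moreover have "bounded (range (\<lambda>\<theta>. cos (s * f \<theta>)))" "bounded (range (\<lambda>\<theta>. sin (s * f \<theta>)))"
    unfolding bounded_real by (auto intro!: exI[of _ 1])
  ultimately show ?thesis
    using wc unfolding tendsto_complex_iff weak_conv_seq_def by (simp add: Re_Im Ps P)
qed

lemma char_fun_tendsto_joint:
  assumes Ps: "\<And>n. prob_space (Ps n)" "\<And>n. sets (Ps n) = sets borel"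
    and P: "prob_space P" "sets P = sets borel"
    and wc: "weak_conv_seq Ps P" and f: "continuous_on UNIV f" "\<And>x. \<bar>f x\<bar> \<le> c"
    and s: "s \<longlonglongrightarrow> s0"
  shows "(\<lambda>n. char_fun (Ps n) f (s n)) \<longlonglongrightarrow> char_fun P f s0"
proof (rule Lim_transform)
  show "(\<lambda>n. char_fun (Ps n) f s0) \<longlonglongrightarrow> char_fun P f s0"
    by (rule char_fun_tendsto[OF Ps P wc f(1)])
  have bound: "norm (char_fun (Ps n) f (s n) - char_fun (Ps n) f s0) \<le> c * \<bar>s n - s0\<bar>" for n
    by (rule char_fun_lipschitz[OF Ps borel_measurable_continuous_onI[OF f(1)] f(2)])
  have "(\<lambda>n. c * \<bar>s n - s0\<bar>) \<longlonglongrightarrow> c * \<bar>s0 - s0\<bar>"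
    by (intro tendsto_mult tendsto_const tendsto_rabs tendsto_diff s)
  then have "(\<lambda>n. c * \<bar>s n - s0\<bar>) \<longlonglongrightarrow> 0" by simp
  then show "(\<lambda>n. char_fun (Ps n) f (s n) - char_fun (Ps n) f s0) \<longlonglongrightarrow> 0"
    by (rule Lim_null_comparison[OF always_eventually, rotated]) (simp add: bound)
qed

lemma weak_conv_seq_of_char_tendsto:
  fixes Xs :: "nat \<Rightarrow> 'u \<Rightarrow> real" and X :: "'w \<Rightarrow> real"
  assumes Ms: "\<And>n. prob_space (Ms n)" "\<And>n. Xs n \<in> borel_measurable (Ms n)"
    and M: "prob_space M" "X \<in> borel_measurable M"
    and char_lim: "\<And>t. (\<lambda>n. \<integral>\<omega>. iexp (t * Xs n \<omega>) \<partial>Ms n) \<longlonglongrightarrow> (\<integral>\<omega>. iexp (t * X \<omega>) \<partial>M)"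
  shows "weak_conv_seq (\<lambda>n. distr (Ms n) borel (Xs n)) (distr M borel X)"
proof -
  have distr: "real_distribution (distr N borel Y)"
      "char (distr N borel Y) t = (\<integral>\<omega>. iexp (t * Y \<omega>) \<partial>N)"
    if "prob_space N" "Y \<in> borel_measurable N" for N and Y :: "_ \<Rightarrow> real" and t
    using prob_space.prob_space_distr[OF that] that(2)
    by (auto simp: real_distribution_def real_distribution_axioms_def char_def integral_distr)
  have distrs: "\<And>n. real_distribution (distr (Ms n) borel (Xs n))"
      "real_distribution (distr M borel X)"
    by (rule distr(1)[OF Ms], rule distr(1)[OF M])
  have "weak_conv_m (\<lambda>n. distr (Ms n) borel (Xs n)) (distr M borel X)"
    using char_lim by (intro levy_continuity[OF distrs]) (simp add: distr(2) Ms M)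
  then show ?thesis
    unfolding weak_conv_seq_def bounded_real
  proof (intro allI impI, elim conjE exE)
    fix g :: "real \<Rightarrow> real" and B assume "continuous_on UNIV g" "\<forall>y\<in>range g. \<bar>y\<bar> \<le> B"
    with \<open>weak_conv_m _ _\<close>
    show "(\<lambda>n. \<integral>x. g x \<partial>distr (Ms n) borel (Xs n)) \<longlonglongrightarrow> (\<integral>x. g x \<partial>distr M borel X)"
      by (intro weak_conv_imp_integral_bdd_continuous_conv[OF distrs, where B=B])
        (auto simp: continuous_on_eq_continuous_at)
  qed
qed

section \<open>Convergence of the random integrals\<close>

lemma proper_msbpD:
  fixes V :: "'w \<Rightarrow> nat \<Rightarrow> real" and \<Theta> :: "'w \<Rightarrow> nat \<Rightarrow> 'a::topological_space"
  assumes "proper_msbp M V \<Theta> \<pi> \<psi> P0"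
  shows proper_msbp_prob_space: "prob_space M"
    and proper_msbp_length_params: "length_params \<pi> \<psi>"
    and proper_msbp_base: "prob_space P0" "sets P0 = sets borel"
    and proper_msbp_unit_cube: "\<And>\<omega>. \<omega> \<in> space M \<Longrightarrow> V \<omega> \<in> unit_cube"
    and proper_msbp_markov_chain_law: "markov_chain_law \<pi> \<psi> (distr M seq_borel V)"
    and proper_msbp_measurable: "(\<lambda>\<omega>. (V \<omega>, \<Theta> \<omega>)) \<in> M \<rightarrow>\<^sub>M seq_borel \<Otimes>\<^sub>M seq_borel"
      "V \<in> M \<rightarrow>\<^sub>M seq_borel"
    and proper_msbp_indep: "distr M (seq_borel \<Otimes>\<^sub>M seq_borel) (\<lambda>\<omega>. (V \<omega>, \<Theta> \<omega>))
      = distr M seq_borel V \<Otimes>\<^sub>M PiM UNIV (\<lambda>_. P0)"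
    and proper_msbp_proper: "AE \<omega> in M. sb_weights (V \<omega>) sums 1"
  using assms unfolding proper_msbp_def diffuse_prob_def unit_cube_def
  by (auto dest: measurable_compose[OF _ measurable_fst])

lemma proper_msbp_borel_prob_on:
  assumes "proper_msbp M V \<Theta> \<pi> \<psi> P0"
  shows "borel_prob_on unit_cube (distr M seq_borel V)"
  unfolding borel_prob_on_def
proof (intro conjI)
  show "prob_space (distr M seq_borel V)"
    using proper_msbpD[OF assms] by (intro prob_space.prob_space_distr)
  show "sets (distr M seq_borel V) = sets borel" by (simp add: sets_PiM_equal_borel)
  show "AE v in distr M seq_borel V. v \<in> unit_cube"
    using proper_msbpD[OF assms]
    by (subst AE_distr_iff[OF _ unit_cube_in_sets]) (auto intro!: AE_I2)
qed

text \<open>Given the length variables v, this is the characteristic function at t of the partial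
  sum of the first N weights times f at independent locations distributed according to P.\<close>
definition partial_sb_char :: "'a measure \<Rightarrow> ('a \<Rightarrow> real) \<Rightarrow> real \<Rightarrow> nat \<Rightarrow> (nat \<Rightarrow> real) \<Rightarrow> complex" where
  "partial_sb_char P f t N v = (\<Prod>j<N. char_fun P f (t * sb_weights v j))"

lemma norm_partial_sb_char_le_1:
  "prob_space P \<Longrightarrow> cmod (partial_sb_char P f t N v) \<le> 1"
  unfolding partial_sb_char_def prod_norm[symmetric]
  by (intro prod_le_1) (simp_all add: norm_char_fun_le_1)

lemma measurable_partial_sb_char:
  assumes "prob_space P" "sets P = sets borel" "f \<in> borel_measurable borel" "\<And>x. \<bar>f x\<bar> \<le> c"
  shows "partial_sb_char P f t N \<in> borel_measurable borel"
  unfolding partial_sb_char_def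
  by (intro borel_measurable_continuous_onI continuous_on_prod continuous_on_mult
      continuous_on_const continuous_on_compose2[OF continuous_on_char_fun[OF assms]]
      continuous_on_sb_weights_component) auto

lemma converges_continuously_on_partial_sb_char:
  assumes Ps: "\<And>n. prob_space (Ps n)" "\<And>n. sets (Ps n) = sets borel"
    and P: "prob_space P" "sets P = sets borel"
    and wc: "weak_conv_seq Ps P" and f: "continuous_on UNIV f" "\<And>x. \<bar>f x\<bar> \<le> c"
  shows "converges_continuously_on K (\<lambda>n. partial_sb_char (Ps n) f t N) (partial_sb_char P f t N)"
proof (rule converges_continuously_onI)
  fix vs and v :: "nat \<Rightarrow> real" assume "vs \<longlonglongrightarrow> v"
  then have "(\<lambda>n. t * sb_weights (vs n) j) \<longlonglongrightarrow> t * sb_weights v j" for j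
    using continuous_on_tendsto_compose[OF continuous_on_sb_weights_component]
    by (intro tendsto_mult tendsto_const) auto
  then show "(\<lambda>n. partial_sb_char (Ps n) f t N (vs n)) \<longlonglongrightarrow> partial_sb_char P f t N v"
    unfolding partial_sb_char_def by (intro tendsto_prod char_fun_tendsto_joint[OF Ps P wc f])
qed

lemma integral_iexp_partial_sum:
  fixes V :: "'w \<Rightarrow> nat \<Rightarrow> real" and \<Theta> :: "'w \<Rightarrow> nat \<Rightarrow> 'a::topological_space"
  assumes msbp: "proper_msbp M V \<Theta> \<pi> \<psi> P0" and f[measurable]: "f \<in> borel_measurable borel"
  shows "(\<integral>\<omega>. iexp (t * (\<Sum>j<N. sb_weights (V \<omega>) j * f (\<Theta> \<omega> j))) \<partial>M)
    = (\<integral>v. partial_sb_char P0 f t N v \<partial>distr M seq_borel V)"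
proof -
  note P0 = proper_msbp_base[OF msbp]
  define \<Phi> where "\<Phi> p = (\<Prod>j<N. iexp (t * sb_weights (fst p) j * f (snd p j)))"
    for p :: "(nat \<Rightarrow> real) \<times> (nat \<Rightarrow> 'a)"
  have \<Phi>_meas: "\<Phi> \<in> borel_measurable (seq_borel \<Otimes>\<^sub>M seq_borel)"
    unfolding \<Phi>_def sb_weights_def by measurable
  have \<Phi>_bound: "cmod (\<Phi> p) \<le> 1" for p
    by (simp add: \<Phi>_def prod_norm[symmetric] norm_exp_i_times)
  have "(\<integral>\<omega>. iexp (t * (\<Sum>j<N. sb_weights (V \<omega>) j * f (\<Theta> \<omega> j))) \<partial>M) = (\<integral>\<omega>. \<Phi> (V \<omega>, \<Theta> \<omega>) \<partial>M)"
    by (simp only: \<Phi>_def iexp_mult_sum fst_conv snd_conv mult.assoc)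
  also have "\<dots> = (\<integral>v. (\<integral>\<theta>. \<Phi> (v, \<theta>) \<partial>PiM UNIV (\<lambda>_. P0)) \<partial>distr M seq_borel V)"
  proof (rule integral_indep_pair[OF proper_msbp_prob_space[OF msbp]
        proper_msbp_measurable(1)[OF msbp] proper_msbp_indep[OF msbp] _ _ \<Phi>_meas \<Phi>_bound])
    show "prob_space (PiM UNIV (\<lambda>_. P0))" by (rule prob_space_PiM) (rule P0(1))
    show "sets (PiM UNIV (\<lambda>_. P0)) = sets seq_borel" by (rule sets_PiM_cong) (simp_all add: P0(2))
  qed
  also have "\<dots> = (\<integral>v. partial_sb_char P0 f t N v \<partial>distr M seq_borel V)"
  proof (rule Bochner_Integration.integral_cong[OF refl])
    fix v
    have "(\<integral>\<theta>. \<Phi> (v, \<theta>) \<partial>PiM UNIV (\<lambda>_. P0)) = (\<Prod>j<N. \<integral>x. iexp (t * sb_weights v j * f x) \<partial>P0)"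
      unfolding \<Phi>_def fst_conv snd_conv
      by (rule integral_prod_iid[OF P0(1) integrable_iexp_comp[OF P0 f]])
    then show "(\<integral>\<theta>. \<Phi> (v, \<theta>) \<partial>PiM UNIV (\<lambda>_. P0)) = partial_sb_char P0 f t N v"
      by (simp add: partial_sb_char_def char_fun_def)
  qed
  finally show ?thesis .
qed

text \<open>The mass left on the stick after N breaks, with the length variables clamped to [0,1]
  so that it is a bounded continuous function on the whole sequence space.\<close>
definition stick_remainder :: "nat \<Rightarrow> (nat \<Rightarrow> real) \<Rightarrow> real" where
  "stick_remainder N v = (\<Prod>i<N. 1 - clamp 0 1 (v i))"

lemma stick_remainder_unit_cube: "v \<in> unit_cube \<Longrightarrow> stick_remainder N v = (\<Prod>i<N. 1 - v i)"
  by (simp add: stick_remainder_def unit_cube_def)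

lemma stick_remainder_bounds: "0 \<le> stick_remainder N v" "stick_remainder N v \<le> 1"
  using clamp_01_in_interval unfolding stick_remainder_def by (auto intro!: prod_nonneg prod_le_1)

lemma continuous_on_stick_remainder: "continuous_on UNIV (stick_remainder N)"
  unfolding stick_remainder_def
  by (intro continuous_on_prod continuous_on_diff continuous_on_const
      continuous_on_compose2[OF continuous_on_clamp_01 continuous_on_product_coordinates]) auto

lemma measurable_stick_remainder: "stick_remainder N \<in> borel_measurable seq_borel"
  by (intro borel_measurable_seq_borel borel_measurable_continuous_onI
      continuous_on_stick_remainder)

lemma integral_stick_remainder_tendsto_0:
  assumes msbp: "proper_msbp M V \<Theta> \<pi> \<psi> P0"
  shows "(\<lambda>N. \<integral>v. stick_remainder N v \<partial>distr M seq_borel V) \<longlonglongrightarrow> 0"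
proof -
  interpret prob_space M by (rule proper_msbp_prob_space[OF msbp])
  note V = proper_msbp_measurable(2)[OF msbp]
  have "AE \<omega> in M. (\<lambda>N. stick_remainder N (V \<omega>)) \<longlonglongrightarrow> 0"
    using proper_msbp_proper[OF msbp]
  proof (rule AE_mp, intro AE_I2 impI)
    fix \<omega> assume "\<omega> \<in> space M" "sb_weights (V \<omega>) sums 1"
    then have "(\<lambda>N. 1 - (\<Sum>j<N. sb_weights (V \<omega>) j)) \<longlonglongrightarrow> 1 - 1"
      by (intro tendsto_diff tendsto_const) (simp add: sums_def)
    with proper_msbp_unit_cube[OF msbp \<open>\<omega> \<in> space M\<close>]
    show "(\<lambda>N. stick_remainder N (V \<omega>)) \<longlonglongrightarrow> 0"
      by (simp add: stick_remainder_unit_cube sum_sb_weights)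
  qed
  then have "(\<lambda>N. \<integral>\<omega>. stick_remainder N (V \<omega>) \<partial>M) \<longlonglongrightarrow> (\<integral>\<omega>. 0 \<partial>M)"
    using stick_remainder_bounds measurable_compose[OF V measurable_stick_remainder]
    by (intro integral_dominated_convergence[where w="\<lambda>_. 1"]) auto
  then show ?thesis
    by (simp add: integral_distr[OF V measurable_stick_remainder])
qed

lemma cmod_iexp_sb_integral_diff_le:
  assumes v: "v \<in> unit_cube" "sb_weights v sums 1" and P0: "prob_space P0" "sets P0 = sets borel"
    and f: "f \<in> borel_measurable borel" "\<And>x. \<bar>f x\<bar> \<le> c"
  shows "cmod (iexp (t * sb_integral f P0 v \<theta>) - iexp (t * (\<Sum>j<N. sb_weights v j * f (\<theta> j))))
    \<le> \<bar>t\<bar> * c * stick_remainder N v"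
proof -
  have "cmod (iexp (t * sb_integral f P0 v \<theta>) - iexp (t * (\<Sum>j<N. sb_weights v j * f (\<theta> j))))
      \<le> \<bar>t * sb_integral f P0 v \<theta> - t * (\<Sum>j<N. sb_weights v j * f (\<theta> j))\<bar>"
    by (rule cmod_iexp_diff_le)
  also have "\<dots> = \<bar>t\<bar> * \<bar>sb_integral f P0 v \<theta> - (\<Sum>j<N. sb_weights v j * f (\<theta> j))\<bar>"
    by (simp add: right_diff_distrib[symmetric] abs_mult)
  also have "\<dots> \<le> \<bar>t\<bar> * (c * (\<Prod>i<N. 1 - v i))"
    by (intro mult_left_mono abs_sb_integral_minus_partial_sum_le[OF v(1) P0 f v(2)]) simp
  finally show ?thesis by (simp add: stick_remainder_unit_cube[OF v(1)])
qed

lemma char_sb_integral_approx: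
  fixes V :: "'w \<Rightarrow> nat \<Rightarrow> real" and \<Theta> :: "'w \<Rightarrow> nat \<Rightarrow> 'a::topological_space"
  assumes msbp: "proper_msbp M V \<Theta> \<pi> \<psi> P0"
    and f: "f \<in> borel_measurable borel" "\<And>x. \<bar>f x\<bar> \<le> c"
  shows "cmod ((\<integral>\<omega>. iexp (t * sb_integral f P0 (V \<omega>) (\<Theta> \<omega>)) \<partial>M)
      - (\<integral>v. partial_sb_char P0 f t N v \<partial>distr M seq_borel V))
    \<le> \<bar>t\<bar> * c * (\<integral>v. stick_remainder N v \<partial>distr M seq_borel V)"
proof -
  interpret prob_space M by (rule proper_msbp_prob_space[OF msbp])
  note P0 = proper_msbp_base[OF msbp] and V = proper_msbp_measurable(2)[OF msbp]
  let ?Y = "\<lambda>\<omega>. iexp (t * sb_integral f P0 (V \<omega>) (\<Theta> \<omega>))"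
  let ?S = "\<lambda>\<omega>. iexp (t * (\<Sum>j<N. sb_weights (V \<omega>) j * f (\<Theta> \<omega> j)))"
  have meas: "?Y \<in> borel_measurable M" "?S \<in> borel_measurable M"
    using measurable_sb_integral[OF P0 f proper_msbp_measurable(1)[OF msbp]
        proper_msbp_unit_cube[OF msbp]]
      proper_msbp_measurable[OF msbp] f(1)
    by (auto simp: sb_weights_def dest: measurable_compose[OF _ measurable_snd])
  then have int: "integrable M ?Y" "integrable M ?S"
    by (auto intro!: integrable_const_bound[where B=1] simp: norm_exp_i_times)
  have "cmod ((\<integral>\<omega>. ?Y \<omega> \<partial>M) - (\<integral>\<omega>. ?S \<omega> \<partial>M)) = cmod (\<integral>\<omega>. ?Y \<omega> - ?S \<omega> \<partial>M)"
    using int by simp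
  also have "\<dots> \<le> (\<integral>\<omega>. cmod (?Y \<omega> - ?S \<omega>) \<partial>M)"
    by (rule integral_norm_bound)
  also have "\<dots> \<le> (\<integral>\<omega>. \<bar>t\<bar> * c * stick_remainder N (V \<omega>) \<partial>M)"
  proof (rule integral_mono_AE)
    show "integrable M (\<lambda>\<omega>. \<bar>t\<bar> * c * stick_remainder N (V \<omega>))"
      using measurable_compose[OF V measurable_stick_remainder] stick_remainder_bounds
      by (intro integrable_mult_right integrable_const_bound[where B=1]) auto
    show "AE \<omega> in M. cmod (?Y \<omega> - ?S \<omega>) \<le> \<bar>t\<bar> * c * stick_remainder N (V \<omega>)"
      using proper_msbp_proper[OF msbp]
    proof (rule AE_mp, intro AE_I2 impI)
      fix \<omega> assume "\<omega> \<in> space M" "sb_weights (V \<omega>) sums 1"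
      with proper_msbp_unit_cube[OF msbp]
      show "cmod (?Y \<omega> - ?S \<omega>) \<le> \<bar>t\<bar> * c * stick_remainder N (V \<omega>)"
        by (intro cmod_iexp_sb_integral_diff_le P0 f) auto
    qed
  qed (use int in auto)
  also have "\<dots> = \<bar>t\<bar> * c * (\<integral>v. stick_remainder N v \<partial>distr M seq_borel V)"
    by (simp add: integral_distr[OF V measurable_stick_remainder])
  finally show ?thesis
    by (simp only: integral_iexp_partial_sum[OF msbp f(1)])
qed

lemma stick_remainder_eventually_small:
  assumes lim: "proper_msbp M V \<Theta> \<pi> \<psi> P0"
    and conv_V: "weak_conv_seq \<mu>s (distr M seq_borel V)" and e: "e > 0"
  shows "\<exists>N. (\<integral>v. stick_remainder N v \<partial>distr M seq_borel V) < e \<and>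
    (\<forall>\<^sub>F n in sequentially. (\<integral>v. stick_remainder N v \<partial>\<mu>s n) < e)"
proof -
  obtain N where N: "(\<integral>v. stick_remainder N v \<partial>distr M seq_borel V) < e"
    using order_tendstoD(2)[OF integral_stick_remainder_tendsto_0[OF lim] e]
    unfolding eventually_sequentially by blast
  have "bounded (range (stick_remainder N))"
    unfolding bounded_real
    by (intro exI[of _ 1])
      (simp add: abs_of_nonneg[OF stick_remainder_bounds(1)] stick_remainder_bounds(2))
  then have "(\<lambda>n. \<integral>v. stick_remainder N v \<partial>\<mu>s n) \<longlonglongrightarrow> (\<integral>v. stick_remainder N v \<partial>distr M seq_borel V)"
    using conv_V continuous_on_stick_remainder unfolding weak_conv_seq_def by blast
  with N show ?thesis by (blast dest: order_tendstoD(2))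
qed

lemma char_sb_integral_tendsto:
  fixes V :: "'w \<Rightarrow> nat \<Rightarrow> real" and \<Theta> :: "'w \<Rightarrow> nat \<Rightarrow> 'a::topological_space"
    and Vn :: "nat \<Rightarrow> 'u \<Rightarrow> nat \<Rightarrow> real" and \<Theta>n :: "nat \<Rightarrow> 'u \<Rightarrow> nat \<Rightarrow> 'a"
  assumes lim: "proper_msbp M V \<Theta> \<pi> \<psi> P0"
    and seq: "\<And>n. proper_msbp (Mn n) (Vn n) (\<Theta>n n) (\<pi>n n) (\<psi>n n) (P0n n)"
    and conv_P0: "weak_conv_seq P0n P0"
    and conv_V: "weak_conv_seq (\<lambda>n. distr (Mn n) seq_borel (Vn n)) (distr M seq_borel V)"
    and f: "continuous_on UNIV f" "\<And>x. \<bar>f x\<bar> \<le> c"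
  shows "(\<lambda>n. \<integral>\<omega>. iexp (t * sb_integral f (P0n n) (Vn n \<omega>) (\<Theta>n n \<omega>)) \<partial>Mn n)
    \<longlonglongrightarrow> (\<integral>\<omega>. iexp (t * sb_integral f P0 (V \<omega>) (\<Theta> \<omega>)) \<partial>M)"
proof (rule tendsto_of_approximations)
  let ?\<mu>s = "\<lambda>n. distr (Mn n) seq_borel (Vn n)" and ?\<mu> = "distr M seq_borel V"
  let ?a = "\<lambda>n. \<integral>\<omega>. iexp (t * sb_integral f (P0n n) (Vn n \<omega>) (\<Theta>n n \<omega>)) \<partial>Mn n"
    and ?a' = "\<integral>\<omega>. iexp (t * sb_integral f P0 (V \<omega>) (\<Theta> \<omega>)) \<partial>M"
    and ?b = "\<lambda>N n. \<integral>v. partial_sb_char (P0n n) f t N v \<partial>?\<mu>s n"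
    and ?b' = "\<lambda>N. \<integral>v. partial_sb_char P0 f t N v \<partial>?\<mu>"
  have f_meas: "f \<in> borel_measurable borel" using f(1) by (rule borel_measurable_continuous_onI)
  note P0s = proper_msbp_base[OF seq] and P0 = proper_msbp_base[OF lim]
  show "(\<lambda>n. ?b N n) \<longlonglongrightarrow> ?b' N" for N
    by (rule weak_conv_seq_integral_converges_continuously_complex[OF conv_V
          proper_msbp_borel_prob_on[OF seq] proper_msbp_borel_prob_on[OF lim] compact_unit_cube
          continuous_on_clamp_cube clamp_cube_in_unit_cube clamp_cube_id
          measurable_partial_sb_char[OF P0s f_meas f(2)]
          measurable_partial_sb_char[OF P0 f_meas f(2)]
          norm_partial_sb_char_le_1[OF P0s(1)] norm_partial_sb_char_le_1[OF P0(1)]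
          converges_continuously_on_partial_sb_char[OF P0s P0 conv_P0 f]])
  fix e :: real assume "e > 0"
  have "0 \<le> c" using f(2) by (rule order_trans[OF abs_ge_zero])
  define C where "C = \<bar>t\<bar> * c + 1"
  have "C > 0" using \<open>0 \<le> c\<close> by (simp add: C_def add_nonneg_pos)
  have close: "dist x y < e" if "cmod (x - y) \<le> \<bar>t\<bar> * c * r" "0 \<le> r" "r < e / C"
    for x y :: complex and r
  proof -
    have "\<bar>t\<bar> * c * r \<le> C * r" using that(2) by (intro mult_right_mono) (simp_all add: C_def)
    also have "C * r < e" using that(3) \<open>C > 0\<close> by (simp add: pos_less_divide_eq mult.commute)
    finally show ?thesis using that(1) by (simp add: dist_norm)
  qed
  have nonneg: "0 \<le> (\<integral>v. stick_remainder N v \<partial>\<nu>)" for N \<nu>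
    using stick_remainder_bounds by (intro integral_nonneg_AE AE_I2) auto
  obtain N where N: "(\<integral>v. stick_remainder N v \<partial>?\<mu>) < e / C"
    and Ns: "\<forall>\<^sub>F n in sequentially. (\<integral>v. stick_remainder N v \<partial>?\<mu>s n) < e / C"
    using stick_remainder_eventually_small[OF lim conv_V] \<open>e > 0\<close> \<open>C > 0\<close> by (meson divide_pos_pos)
  from Ns have "\<forall>\<^sub>F n in sequentially. dist (?a n) (?b N n) < e"
    by eventually_elim (rule close[OF char_sb_integral_approx[OF seq f_meas f(2)] nonneg])
  moreover have "dist ?a' (?b' N) < e"
    by (rule close[OF char_sb_integral_approx[OF lim f_meas f(2)] nonneg N])
  ultimately show "\<exists>N. (\<forall>\<^sub>F n in sequentially. dist (?a n) (?b N n) < e) \<and> dist ?a' (?b' N) < e"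
    by blast
qed

lemma weak_conv_seq_sb_integral:
  fixes V :: "'w \<Rightarrow> nat \<Rightarrow> real" and \<Theta> :: "'w \<Rightarrow> nat \<Rightarrow> 'a::topological_space"
    and Vn :: "nat \<Rightarrow> 'u \<Rightarrow> nat \<Rightarrow> real" and \<Theta>n :: "nat \<Rightarrow> 'u \<Rightarrow> nat \<Rightarrow> 'a"
  assumes lim: "proper_msbp M V \<Theta> \<pi> \<psi> P0"
    and seq: "\<And>n. proper_msbp (Mn n) (Vn n) (\<Theta>n n) (\<pi>n n) (\<psi>n n) (P0n n)"
    and conv_P0: "weak_conv_seq P0n P0"
    and conv_V: "weak_conv_seq (\<lambda>n. distr (Mn n) seq_borel (Vn n)) (distr M seq_borel V)"
    and f: "continuous_on UNIV f" "bounded (range f)"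
  shows "weak_conv_seq (\<lambda>n. distr (Mn n) borel (\<lambda>\<omega>. sb_integral f (P0n n) (Vn n \<omega>) (\<Theta>n n \<omega>)))
    (distr M borel (\<lambda>\<omega>. sb_integral f P0 (V \<omega>) (\<Theta> \<omega>)))"
proof (rule weak_conv_seq_of_char_tendsto)
  obtain c where c: "\<And>x. \<bar>f x\<bar> \<le> c" using f(2) unfolding bounded_real by blast
  have f_meas: "f \<in> borel_measurable borel" using f(1) by (rule borel_measurable_continuous_onI)
  show "(\<lambda>\<omega>. sb_integral f (P0n n) (Vn n \<omega>) (\<Theta>n n \<omega>)) \<in> borel_measurable (Mn n)" for n
    by (rule measurable_sb_integral[OF proper_msbp_base[OF seq] f_meas c
          proper_msbp_measurable(1)[OF seq] proper_msbp_unit_cube[OF seq]])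
  show "(\<lambda>\<omega>. sb_integral f P0 (V \<omega>) (\<Theta> \<omega>)) \<in> borel_measurable M"
    by (rule measurable_sb_integral[OF proper_msbp_base[OF lim] f_meas c
          proper_msbp_measurable(1)[OF lim] proper_msbp_unit_cube[OF lim]])
  show "(\<lambda>n. \<integral>\<omega>. iexp (t * sb_integral f (P0n n) (Vn n \<omega>) (\<Theta>n n \<omega>)) \<partial>Mn n)
      \<longlonglongrightarrow> (\<integral>\<omega>. iexp (t * sb_integral f P0 (V \<omega>) (\<Theta> \<omega>)) \<partial>M)" for t
    by (rule char_sb_integral_tendsto[OF lim seq conv_P0 conv_V f(1) c])
qed (use proper_msbp_prob_space[OF seq] proper_msbp_prob_space[OF lim] in auto)

theorem mainTheorem4:
  fixes M :: "'w measure" and V :: "'w \<Rightarrow> nat \<Rightarrow> real" and \<Theta> :: "'w \<Rightarrow> nat \<Rightarrow> 'a::polish_space"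
    and \<pi> :: "real measure" and \<psi> :: "nat \<Rightarrow> real \<Rightarrow> real measure" and P0 :: "'a measure"
    and Mn :: "nat \<Rightarrow> 'u measure" and Vn :: "nat \<Rightarrow> 'u \<Rightarrow> nat \<Rightarrow> real"
    and \<Theta>n :: "nat \<Rightarrow> 'u \<Rightarrow> nat \<Rightarrow> 'a"
    and \<pi>n :: "nat \<Rightarrow> real measure" and \<psi>n :: "nat \<Rightarrow> nat \<Rightarrow> real \<Rightarrow> real measure"
    and P0n :: "nat \<Rightarrow> 'a measure"
  assumes lim: "proper_msbp M V \<Theta> \<pi> \<psi> P0"
    and seq: "\<And>n. proper_msbp (Mn n) (Vn n) (\<Theta>n n) (\<pi>n n) (\<psi>n n) (P0n n)"
    and conv_pi: "weak_conv_seq \<pi>n \<pi>"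
    and conv_P0: "weak_conv_seq P0n P0"
    and conv_psi: "\<And>j u us. j \<ge> 1 \<Longrightarrow> u \<in> {0..1} \<Longrightarrow> (\<forall>n. us n \<in> {0..1}) \<Longrightarrow>
                     us \<longlonglongrightarrow> u \<Longrightarrow> weak_conv_seq (\<lambda>n. \<psi>n n j (us n)) (\<psi> j u)"
  shows "weak_conv_seq (\<lambda>n. distr (Mn n) (PiM UNIV (\<lambda>_. borel)) (Vn n))
                       (distr M (PiM UNIV (\<lambda>_. borel)) V) \<and>
         weak_conv_seq (\<lambda>n. distr (Mn n) (PiM UNIV (\<lambda>_. borel)) (\<lambda>\<omega>. sb_weights (Vn n \<omega>)))
                       (distr M (PiM UNIV (\<lambda>_. borel)) (\<lambda>\<omega>. sb_weights (V \<omega>))) \<and>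
         (\<forall>f :: 'a \<Rightarrow> real. continuous_on UNIV f \<and> bounded (range f) \<longrightarrow>
           weak_conv_seq
             (\<lambda>n. distr (Mn n) borel (\<lambda>\<omega>. \<integral>x. f x \<partial>sb_measure (sb_weights (Vn n \<omega>)) (\<Theta>n n \<omega>) (P0n n)))
             (distr M borel (\<lambda>\<omega>. \<integral>x. f x \<partial>sb_measure (sb_weights (V \<omega>)) (\<Theta> \<omega>) P0)))"
proof -
  have conv_V: "weak_conv_seq (\<lambda>n. distr (Mn n) seq_borel (Vn n)) (distr M seq_borel V)"
    by (rule weak_conv_seq_markov_chain_law[OF proper_msbp_markov_chain_law[OF seq]
          proper_msbp_length_params[OF seq] proper_msbp_borel_prob_on[OF seq]
          proper_msbp_markov_chain_law[OF lim] proper_msbp_length_params[OF lim]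
          proper_msbp_borel_prob_on[OF lim] conv_pi conv_psi])
  show ?thesis
    using conv_V weak_conv_seq_sb_weights[OF conv_V proper_msbp_measurable(2)[OF seq]
        proper_msbp_measurable(2)[OF lim]]
      weak_conv_seq_sb_integral[OF lim seq conv_P0 conv_V]
    by (simp add: sb_integral_def)
qed

end
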